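(* Let $N$ be an orchard network on $X\subseteq[n]$ and let $S=s_1\cdots s_k$ ($k\ge1$) be a sequence of pairs of elements of $[n]$. Then $S$ is reducible in $N$ if and only if $S$ is reducible in $\boldsymbol\mu(N)$. Moreover, in that case $\boldsymbol\mu(N^S)=\boldsymbol\mu(N)^S$.
   Context: A (binary) phylogenetic network on a finite set $X\subseteq[n]=\{1,\dots,n\}$ is a directed acyclic graph $N=(V,A)$ without parallel arcs in which every node is exactly one of: the root (indegree 0, outdegree 1; there is exactly one), a leaf (indegree 1, outdegree 0), a tree node (indegree 1, outdegree 2), or a reticulation (indegree 2, outdegree 1); the leaves are identified with the elements of $X$. $V_T(N)$ denotes the set of leaves and tree nodes, $V_H(N)$ the set of reticulations. $m(u,v)$ is the number of directed paths from $u$ to $v$ (trivial paths allowed). Extended $\mu$-vectors: $\mu_i(u)=m(u,i)$ for $i\in[n]$ (0 if $i\notin X$), $\mu_0(u)=\sum_{h\in V_H(N)} m(u,h)$, $\mu(u)=(\mu_0(u),\dots,\mu_n(u))$; $\boldsymbol\mu(N)$ is the multiset $\{\mu(u)\mid u\in V_T(N)\}$. $\delta_S$ is the 0/1 indicator vector of $S\subseteq\{0,\dots,n\}$ and $\delta_{j_1,\dots,j_k}=\delta_{\{j_1,\dots,j_k\}}$. Network reductions: for distinct leaves $i,j$ with parents $p_i,p_j$, $(i,j)$ is a cherry of $N$ if $p_i=p_j$, a reticulated-cherry of $N$ if $p_i$ is a reticulation, $p_j$ is a tree node and $p_j$ is a parent of $p_i$, and reducible if either. Suppressing a node with indegree 1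 and outdegree 1 means deleting it and its two arcs and adding an arc from its parent to its child. $N^{(i,j)}$: if $(i,j)$ is a cherry, delete leaf $i$ and its incoming arc, then suppress $p_i$; if a reticulated-cherry, delete the arc $p_jp_i$ and suppress $p_i$ and $p_j$. A sequence $S=s_1\cdots s_k$ is reducible in $N$ if $s_1$ is reducible in $N$ and each $s_t$ is reducible in the network obtained from $N$ by successively reducing $s_1,\dots,s_{t-1}$; $N^S$ is the final network; $S$ is complete if $N^S=I_x$ (a root joined by an arc to a single leaf $x$). $N$ is orchard if it has a complete reducible sequence. Multiset reductions: for a finite multiset $\boldsymbol\mu$ of vectors of nonnegative integers indexed by $0,\dots,n$ and distinct $i,j\in[n]$: $(i,j)$ is a cherry of $\boldsymbol\mu$ if $\delta_{i,j}\in\boldsymbol\mu$ with multiplicity exactly 1 and every $\mu\in\boldsymbol\mu$ other than $\delta_i,\delta_j$ satisfies $\mu_i=\mu_j$; $(i,j)$ is a reticulated-cherry of $\boldsymbol\mu$ if $\delta_{0,i,j}\in\boldsymbol\mu$ with multiplicity exactly 1 and every $\mu\in\boldsymbol\mu$ other than $\delta_i,\delta_j$ satisfies $\mu_0\ge\mu_i\ge\mu_j$; $(i,j)$ is reducible in $\boldsymbol\mu$ if it is either. The reduction $\boldsymbol\mu^{(i,j)}$ is the multiset $\{\mu-\mu_i\delta_i \mid \mu\in\boldsymbol\mu\setminus\{\delta_i,\delta_{i,j}\}\}$ if $(i,j)$ is a cherry of $\boldsymbol\mu$, and $\{\mu-\mu_i\delta_0-\mu_j\delta_i\mid \mu\in\boldsymbol\mu\setminus\{\delta_{0,i,j}\}\}$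 if it is a reticulated-cherry of $\boldsymbol\mu$ (it is used only when exactly one of these holds). A sequence $S=s_1\cdots s_k$ is reducible in $\boldsymbol\mu$ if $s_1$ is reducible in $\boldsymbol\mu$ and each $s_t$ is reducible in $(\cdots(\boldsymbol\mu^{s_1})\cdots)^{s_{t-1}}$; then $\boldsymbol\mu^S=(\cdots(\boldsymbol\mu^{s_1})\cdots)^{s_k}$. *)

theory Defs
  imports Main "HOL-Library.Multiset"
begin

text \<open>Arcs form a multiset (so that reductions, which may create
parallel arcs, are modelled literally); an input network has no parallel arcs.\<close>

datatype 'v pnode = Leaf nat | Inner 'v

type_synonym 'v net = "'v pnode set \<times> ('v pnode \<times> 'v pnode) multiset"

definition indeg :: "('a \<times> 'a) multiset \<Rightarrow> 'a \<Rightarrow> nat" where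
  "indeg A v = size (filter_mset (\<lambda>(x,y). y = v) A)"

definition outdeg :: "('a \<times> 'a) multiset \<Rightarrow> 'a \<Rightarrow> nat" where
  "outdeg A v = size (filter_mset (\<lambda>(x,y). x = v) A)"

definition is_root_node :: "'v net \<Rightarrow> 'v pnode \<Rightarrow> bool" where
  "is_root_node N v \<longleftrightarrow> v \<in> fst N \<and> indeg (snd N) v = 0 \<and> outdeg (snd N) v = 1"

definition is_leaf_node :: "'v net \<Rightarrow> 'v pnode \<Rightarrow> bool" where
  "is_leaf_node N v \<longleftrightarrow> v \<in> fst N \<and> indeg (snd N) v = 1 \<and> outdeg (snd N) v = 0"

definition is_tree_node :: "'v net \<Rightarrow> 'v pnode \<Rightarrow> bool" where
  "is_tree_node N v \<longleftrightarrow> v \<in> fst N \<and> indeg (snd N) v = 1 \<and> outdeg (snd N) v = 2"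

definition is_ret_node :: "'v net \<Rightarrow> 'v pnode \<Rightarrow> bool" where
  "is_ret_node N v \<longleftrightarrow> v \<in> fst N \<and> indeg (snd N) v = 2 \<and> outdeg (snd N) v = 1"

definition is_network :: "nat \<Rightarrow> nat set \<Rightarrow> 'v net \<Rightarrow> bool" where
  "is_network n X N \<longleftrightarrow>
     (let V = fst N; A = snd N in
       finite V \<and>
       X \<subseteq> {1..n} \<and>
       (\<forall>(u,v) \<in># A. u \<in> V \<and> v \<in> V) \<and>
       (\<forall>a. count A a \<le> 1) \<and>
       acyclic (set_mset A) \<and>
       (\<exists>!r. r \<in> V \<and> indeg A r = 0) \<and>
       (\<forall>v \<in> V. is_root_node N v \<or> is_leaf_node N v \<or> is_tree_node N v \<or> is_ret_node N v) \<and>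
       {v \<in> V. is_leaf_node N v} = Leaf ` X \<and>
       V \<inter> range Leaf = Leaf ` X)"

definition V_T :: "'v net \<Rightarrow> 'v pnode set" where
  "V_T N = {v \<in> fst N. is_leaf_node N v \<or> is_tree_node N v}"

definition V_H :: "'v net \<Rightarrow> 'v pnode set" where
  "V_H N = {v \<in> fst N. is_ret_node N v}"

text \<open>Number of directed paths from u to v (trivial path allowed), counted with
arc multiplicities.\<close>
definition npaths :: "('a \<times> 'a) multiset \<Rightarrow> 'a \<Rightarrow> 'a \<Rightarrow> nat" where
  "npaths A u v = (\<Sum>p \<in> {p. p \<noteq> [] \<and> hd p = u \<and> last p = v \<and>
                          successively (\<lambda>x y. (x,y) \<in># A) p}.
                    prod_list (map (count A) (zip p (tl p))))"

text \<open>Extended mu-vectors, indexed by 0..n (entries beyond n are 0).\<close>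
definition mu_vec :: "nat \<Rightarrow> 'v net \<Rightarrow> 'v pnode \<Rightarrow> (nat \<Rightarrow> nat)" where
  "mu_vec n N u = (\<lambda>k. if k = 0 then (\<Sum>h \<in> V_H N. npaths (snd N) u h)
                      else if k \<le> n \<and> Leaf k \<in> fst N then npaths (snd N) u (Leaf k)
                      else 0)"

definition mu_net :: "nat \<Rightarrow> 'v net \<Rightarrow> (nat \<Rightarrow> nat) multiset" where
  "mu_net n N = image_mset (mu_vec n N) (mset_set (V_T N))"

definition par :: "('a \<times> 'a) multiset \<Rightarrow> 'a \<Rightarrow> 'a" where
  "par A v = (THE u. (u,v) \<in># A)"

definition chld :: "('a \<times> 'a) multiset \<Rightarrow> 'a \<Rightarrow> 'a" where
  "chld A v = (THE c. (v,c) \<in># A)"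

definition suppress :: "'v net \<Rightarrow> 'v pnode \<Rightarrow> 'v net" where
  "suppress N w = (let p = par (snd N) w; c = chld (snd N) w in
     (fst N - {w}, snd N - {#(p,w), (w,c)#} + {#(p,c)#}))"

definition net_cherry :: "'v net \<Rightarrow> nat \<times> nat \<Rightarrow> bool" where
  "net_cherry N s = (case s of (i,j) \<Rightarrow>
     i \<noteq> j \<and> is_leaf_node N (Leaf i) \<and> is_leaf_node N (Leaf j) \<and>
     par (snd N) (Leaf i) = par (snd N) (Leaf j))"

definition net_ret_cherry :: "'v net \<Rightarrow> nat \<times> nat \<Rightarrow> bool" where
  "net_ret_cherry N s = (case s of (i,j) \<Rightarrow>
     i \<noteq> j \<and> is_leaf_node N (Leaf i) \<and> is_leaf_node N (Leaf j) \<and>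
     is_ret_node N (par (snd N) (Leaf i)) \<and> is_tree_node N (par (snd N) (Leaf j)) \<and>
     (par (snd N) (Leaf j), par (snd N) (Leaf i)) \<in># snd N)"

definition net_reducible :: "'v net \<Rightarrow> nat \<times> nat \<Rightarrow> bool" where
  "net_reducible N s \<longleftrightarrow> net_cherry N s \<or> net_ret_cherry N s"

definition net_red :: "'v net \<Rightarrow> nat \<times> nat \<Rightarrow> 'v net" where
  "net_red N s = (case s of (i,j) \<Rightarrow>
     (let pi = par (snd N) (Leaf i); pj = par (snd N) (Leaf j) in
      if net_cherry N s then
        suppress (fst N - {Leaf i}, snd N - {#(pi, Leaf i)#}) pi
      else
        suppress (suppress (fst N, snd N - {#(pj, pi)#}) pi) pj))"

fun net_seq_reducible :: "'v net \<Rightarrow> (nat \<times> nat) list \<Rightarrow> bool" where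
  "net_seq_reducible N [] = True"
| "net_seq_reducible N (s # S) = (net_reducible N s \<and> net_seq_reducible (net_red N s) S)"

fun net_seq_red :: "'v net \<Rightarrow> (nat \<times> nat) list \<Rightarrow> 'v net" where
  "net_seq_red N [] = N"
| "net_seq_red N (s # S) = net_seq_red (net_red N s) S"

definition is_I :: "'v net \<Rightarrow> nat \<Rightarrow> bool" where
  "is_I N x \<longleftrightarrow> (\<exists>r. r \<noteq> Leaf x \<and> fst N = {r, Leaf x} \<and> snd N = {#(r, Leaf x)#})"

definition orchard :: "'v net \<Rightarrow> bool" where
  "orchard N \<longleftrightarrow> (\<exists>S x. net_seq_reducible N S \<and> is_I (net_seq_red N S) x)"

definition delta :: "nat set \<Rightarrow> (nat \<Rightarrow> nat)" where
  "delta S = (\<lambda>k. if k \<in> S then 1 else 0)"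

definition ms_cherry :: "nat \<Rightarrow> (nat \<Rightarrow> nat) multiset \<Rightarrow> nat \<times> nat \<Rightarrow> bool" where
  "ms_cherry n M s = (case s of (i,j) \<Rightarrow>
     i \<noteq> j \<and> i \<in> {1..n} \<and> j \<in> {1..n} \<and>
     count M (delta {i,j}) = 1 \<and>
     (\<forall>\<mu> \<in># M. \<mu> \<noteq> delta {i} \<and> \<mu> \<noteq> delta {j} \<longrightarrow> \<mu> i = \<mu> j))"

definition ms_ret_cherry :: "nat \<Rightarrow> (nat \<Rightarrow> nat) multiset \<Rightarrow> nat \<times> nat \<Rightarrow> bool" where
  "ms_ret_cherry n M s = (case s of (i,j) \<Rightarrow>
     i \<noteq> j \<and> i \<in> {1..n} \<and> j \<in> {1..n} \<and>
     count M (delta {0,i,j}) = 1 \<and>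
     (\<forall>\<mu> \<in># M. \<mu> \<noteq> delta {i} \<and> \<mu> \<noteq> delta {j} \<longrightarrow> \<mu> 0 \<ge> \<mu> i \<and> \<mu> i \<ge> \<mu> j))"

definition ms_reducible :: "nat \<Rightarrow> (nat \<Rightarrow> nat) multiset \<Rightarrow> nat \<times> nat \<Rightarrow> bool" where
  "ms_reducible n M s \<longleftrightarrow> ms_cherry n M s \<or> ms_ret_cherry n M s"

definition ms_red :: "nat \<Rightarrow> (nat \<Rightarrow> nat) multiset \<Rightarrow> nat \<times> nat \<Rightarrow> (nat \<Rightarrow> nat) multiset option" where
  "ms_red n M s = (case s of (i,j) \<Rightarrow>
     if ms_cherry n M s \<and> \<not> ms_ret_cherry n M s then
       Some (image_mset (\<lambda>\<mu>. \<mu>(i := 0)) (M - {#delta {i}, delta {i,j}#}))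
     else if ms_ret_cherry n M s \<and> \<not> ms_cherry n M s then
       Some (image_mset (\<lambda>\<mu>. \<mu>(0 := \<mu> 0 - \<mu> i, i := \<mu> i - \<mu> j)) (M - {#delta {0,i,j}#}))
     else None)"

fun ms_seq_reducible :: "nat \<Rightarrow> (nat \<Rightarrow> nat) multiset \<Rightarrow> (nat \<times> nat) list \<Rightarrow> bool" where
  "ms_seq_reducible n M [] = True"
| "ms_seq_reducible n M (s # S) =
     (ms_reducible n M s \<and>
      (S \<noteq> [] \<longrightarrow> (case ms_red n M s of None \<Rightarrow> False | Some M' \<Rightarrow> ms_seq_reducible n M' S)))"

fun ms_seq_red :: "nat \<Rightarrow> (nat \<Rightarrow> nat) multiset \<Rightarrow> (nat \<times> nat) list \<Rightarrow> (nat \<Rightarrow> nat) multiset option" where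
  "ms_seq_red n M [] = Some M"
| "ms_seq_red n M (s # S) = (case ms_red n M s of None \<Rightarrow> None | Some M' \<Rightarrow> ms_seq_red n M' S)"

end

theory Submission
  imports Defs
begin

text \<open>Writing \<open>own(u)\<close> for the contribution of the trivial path at \<open>u\<close> (a unit in coordinate 0
  if \<open>u\<close> is a reticulation, in coordinate \<open>k\<close> if \<open>u\<close> is the leaf \<open>k\<close>), path counting gives
  \<open>\<mu>(u) = own(u) + \<Sum>\<^sub>c \<mu>(c)\<close> over the children \<open>c\<close> of \<open>u\<close>. Since every node reaches a
  leaf, this forces \<open>\<delta>\<^sub>i\<^sub>j\<close> to occur in \<open>\<mu>(N)\<close> exactly at the common parent of a cherry
  \<open>{i,j}\<close>, and \<open>\<delta>\<^sub>0\<^sub>i\<^sub>j\<close> exactly at the tree node above a reticulated cherry, in one of two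
  orientations. Counting paths to a leaf through its parent turns the remaining conditions of
  the multiset definitions into the network ones; the wrong orientation is ruled out at the
  child of the root, which reaches the second parent of the reticulation.

  Both network reductions delete a few nodes and shortcut the paths through them. The
  arc-deletion formula \<open>m\<^sub>A(u,x) = m\<^sub>B(u,x) + m\<^sub>B(u,a) m\<^sub>B(b,x)\<close> for \<open>A = B + {(a,b)}\<close>
  then shows that \<open>\<mu>\<close> of the reduced network is the reduced multiset, and the reduced network is
  again a network, so the statement follows by induction on the sequence.\<close>

section \<open>Counting paths in a finite acyclic multigraph\<close>

definition parents :: "('a \<times> 'a) multiset \<Rightarrow> 'a \<Rightarrow> 'a set" where
  "parents A v = {w. (w,v) \<in># A}"

definition children :: "('a \<times> 'a) multiset \<Rightarrow> 'a \<Rightarrow> 'a set" where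
  "children A v = {c. (v,c) \<in># A}"

lemma finite_parents: "finite (parents A v)"
  by (rule finite_subset[of _ "fst ` set_mset A"]) (force simp: parents_def)+

lemma finite_children: "finite (children A v)"
  by (rule finite_subset[of _ "snd ` set_mset A"]) (force simp: children_def)+

lemma child_iff_parent: "c \<in> children A u \<longleftrightarrow> u \<in> parents A c"
  by (simp add: children_def parents_def)

lemma par_eq: "parents A v = {p} \<Longrightarrow> par A v = p"
  unfolding par_def by (rule the_equality) (auto simp: parents_def)

lemma chld_eq: "children A v = {c} \<Longrightarrow> chld A v = c"
  unfolding chld_def by (rule the_equality) (auto simp: children_def)

definition dpaths :: "('a \<times> 'a) multiset \<Rightarrow> 'a \<Rightarrow> 'a \<Rightarrow> 'a list set" where
  "dpaths A u v = {p. p \<noteq> [] \<and> hd p = u \<and> last p = v \<and> successively (\<lambda>x y. (x,y) \<in># A) p}"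

definition path_weight :: "('a \<times> 'a) multiset \<Rightarrow> 'a list \<Rightarrow> nat" where
  "path_weight A p = prod_list (map (count A) (zip p (tl p)))"

lemma npaths_eq_sum_path_weight: "npaths A u v = (\<Sum>p\<in>dpaths A u v. path_weight A p)"
  by (simp add: npaths_def dpaths_def path_weight_def)

lemma path_weight_Cons: "q \<noteq> [] \<Longrightarrow> path_weight A (u # q) = count A (u, hd q) * path_weight A q"
  by (cases q) (auto simp: path_weight_def)

lemma acyclic_arc_rtrancl_contr: "acyclic R \<Longrightarrow> (u,c) \<in> R \<Longrightarrow> (c,u) \<in> R\<^sup>* \<Longrightarrow> False"
  by (meson acyclic_def rtrancl_into_trancl2)

lemma acyclic_submset: "acyclic (set_mset A) \<Longrightarrow> B \<subseteq># A \<Longrightarrow> acyclic (set_mset B)"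
  by (meson acyclic_subset set_mset_mono)

lemma acyclic_add_mset_left: "acyclic (set_mset (B + C)) \<Longrightarrow> acyclic (set_mset B)"
  by (erule acyclic_submset) simp

lemma successively_nth_trancl:
  "successively (\<lambda>x y. (x,y) \<in> R) p \<Longrightarrow> i < j \<Longrightarrow> j < length p \<Longrightarrow> (p!i, p!j) \<in> R\<^sup>+"
proof (induction p arbitrary: i j)
  case Nil thus ?case by simp
next
  case (Cons x xs)
  then obtain y ys where xs: "xs = y # ys" by (cases xs) auto
  have xy: "(x,y) \<in> R" and sxs: "successively (\<lambda>x y. (x,y) \<in> R) xs"
    using Cons.prems(1) xs by auto
  show ?case
  proof (cases i)
    case 0
    show ?thesis
    proof (cases "j = 1")
      case True thus ?thesis using 0 xy xs by simp
    next
      case False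
      then have "(xs!0, xs!(j-1)) \<in> R\<^sup>+" using Cons.IH[OF sxs, of 0 "j-1"] Cons.prems 0 by simp
      hence "(x, xs!(j-1)) \<in> R\<^sup>+" using xy xs by (simp add: trancl_into_trancl2)
      thus ?thesis using 0 False Cons.prems(2) by (cases j) auto
    qed
  next
    case (Suc i')
    then obtain j' where j: "j = Suc j'" using Cons.prems(2) by (cases j) auto
    show ?thesis using Cons.IH[OF sxs, of i' j'] Cons.prems Suc j by simp
  qed
qed

lemma successively_acyclic_distinct:
  assumes "acyclic R" "successively (\<lambda>x y. (x,y) \<in> R) p" shows "distinct p"
proof -
  have "p!i \<noteq> p!j" if "i < j" "j < length p" for i j
    using successively_nth_trancl[OF assms(2) that] assms(1) by (auto simp: acyclic_def)
  thus ?thesis unfolding distinct_conv_nth by (metis linorder_neqE_nat)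
qed

lemma successively_hd_last_rtrancl:
  "successively (\<lambda>x y. (x,y) \<in> R) p \<Longrightarrow> p \<noteq> [] \<Longrightarrow> (hd p, last p) \<in> R\<^sup>*"
  by (induction p rule: induct_list012) (auto intro: converse_rtrancl_into_rtrancl)

text \<open>Acyclicity makes every path distinct, hence there are only finitely many of them.\<close>

lemma finite_dpaths:
  assumes "acyclic (set_mset A)" shows "finite (dpaths A u v)"
proof (rule finite_subset)
  show "dpaths A u v \<subseteq> {xs. set xs \<subseteq> insert u (snd ` set_mset A) \<and> distinct xs}"
  proof
    fix p assume p: "p \<in> dpaths A u v"
    hence s: "successively (\<lambda>x y. (x,y) \<in> set_mset A) p" and ne: "p \<noteq> []" and h: "hd p = u"
      by (auto simp: dpaths_def)
    have "set p \<subseteq> insert u (snd ` set_mset A)"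
    proof
      fix x assume "x \<in> set p"
      then obtain k where k: "k < length p" "x = p!k" by (auto simp: in_set_conv_nth)
      show "x \<in> insert u (snd ` set_mset A)"
      proof (cases k)
        case 0 thus ?thesis using k h ne by (simp add: hd_conv_nth)
      next
        case (Suc k')
        have "(p!k', p!Suc k') \<in> set_mset A" using successively_nth[OF s] k Suc by simp
        thus ?thesis using k Suc by (metis image_iff insertI2 snd_conv)
      qed
    qed
    with successively_acyclic_distinct[OF assms s]
    show "p \<in> {xs. set xs \<subseteq> insert u (snd ` set_mset A) \<and> distinct xs}" by simp
  qed
  show "finite {xs. set xs \<subseteq> insert u (snd ` set_mset A) \<and> distinct xs}"
    by (rule finite_subset_distinct) simp
qed

lemma npaths_nonzero_imp_rtrancl: "npaths A u v \<noteq> 0 \<Longrightarrow> (u,v) \<in> (set_mset A)\<^sup>*"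
proof -
  assume "npaths A u v \<noteq> 0"
  then obtain p where "p \<in> dpaths A u v" unfolding npaths_eq_sum_path_weight
    using sum.not_neutral_contains_not_neutral by blast
  thus ?thesis using successively_hd_last_rtrancl[of "set_mset A" p] by (auto simp: dpaths_def)
qed

lemma dpaths_unfold:
  "dpaths A u v = (if u = v then {[u]} else {}) \<union> (\<Union>c\<in>children A u. (#) u ` dpaths A c v)"
proof (intro equalityI subsetI)
  fix p assume p: "p \<in> dpaths A u v"
  then obtain rest where pr: "p = u # rest" by (cases p) (auto simp: dpaths_def)
  show "p \<in> (if u = v then {[u]} else {}) \<union> (\<Union>c\<in>children A u. (#) u ` dpaths A c v)"
  proof (cases rest)
    case Nil thus ?thesis using p pr by (auto simp: dpaths_def)
  next
    case (Cons c r)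
    have "rest \<in> dpaths A c v" "c \<in> children A u" using p pr Cons
      by (auto simp: dpaths_def children_def)
    thus ?thesis using pr by blast
  qed
next
  fix p assume "p \<in> (if u = v then {[u]} else {}) \<union> (\<Union>c\<in>children A u. (#) u ` dpaths A c v)"
  thus "p \<in> dpaths A u v"
    by (auto simp: dpaths_def children_def successively_Cons split: if_splits)
qed

lemma npaths_unfold_out:
  assumes "acyclic (set_mset A)"
  shows "npaths A u v = (if u = v then 1 else 0) + (\<Sum>c\<in>children A u. count A (u,c) * npaths A c v)"
proof -
  let ?S = "children A u"
  have fin: "\<And>c. finite (dpaths A c v)" using finite_dpaths[OF assms] .
  have disj: "(if u = v then {[u]} else {}) \<inter> (\<Union>c\<in>?S. (#) u ` dpaths A c v) = {}"
    by (auto simp: dpaths_def)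
  have "npaths A u v = (\<Sum>p\<in>(if u = v then {[u]} else {}). path_weight A p)
                      + (\<Sum>p\<in>(\<Union>c\<in>?S. (#) u ` dpaths A c v). path_weight A p)"
    unfolding npaths_eq_sum_path_weight dpaths_unfold[of A u v]
    by (rule sum.union_disjoint) (use fin disj in \<open>auto simp: finite_children\<close>)
  also have "(\<Sum>p\<in>(if u = v then {[u]} else {}). path_weight A p) = (if u = v then 1 else 0)"
    by (simp add: path_weight_def)
  also have "(\<Sum>p\<in>(\<Union>c\<in>?S. (#) u ` dpaths A c v). path_weight A p)
           = (\<Sum>c\<in>?S. \<Sum>p\<in>(#) u ` dpaths A c v. path_weight A p)"
    by (rule sum.UNION_disjoint) (use fin in \<open>auto simp: dpaths_def finite_children\<close>)
  also have "\<dots> = (\<Sum>c\<in>?S. count A (u,c) * npaths A c v)"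
  proof (rule sum.cong[OF refl])
    fix c
    have "(\<Sum>p\<in>(#) u ` dpaths A c v. path_weight A p) = (\<Sum>q\<in>dpaths A c v. path_weight A (u # q))"
      by (rule sum.reindex_cong[of "(#) u"]) (auto simp: inj_on_def)
    also have "\<dots> = (\<Sum>q\<in>dpaths A c v. count A (u,c) * path_weight A q)"
      by (rule sum.cong) (auto simp: path_weight_Cons dpaths_def)
    finally show "(\<Sum>p\<in>(#) u ` dpaths A c v. path_weight A p) = count A (u,c) * npaths A c v"
      by (simp add: npaths_eq_sum_path_weight sum_distrib_left)
  qed
  finally show ?thesis .
qed

lemma npaths_unfold_out_superset:
  assumes "acyclic (set_mset A)" "finite T" "children A u \<subseteq> T"
  shows "npaths A u v = (if u = v then 1 else 0) + (\<Sum>c\<in>T. count A (u,c) * npaths A c v)"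
proof -
  have "(\<Sum>c\<in>children A u. count A (u,c) * npaths A c v) = (\<Sum>c\<in>T. count A (u,c) * npaths A c v)"
    by (rule sum.mono_neutral_left) (use assms in \<open>auto simp: children_def not_in_iff\<close>)
  thus ?thesis using npaths_unfold_out[OF assms(1), of u v] by linarith
qed

lemma npaths_refl: assumes "acyclic (set_mset A)" shows "npaths A u u = 1"
proof -
  have "npaths A c u = 0" if "c \<in> children A u" for c
    using that npaths_nonzero_imp_rtrancl[of A c u] acyclic_arc_rtrancl_contr[OF assms]
    by (auto simp: children_def)
  thus ?thesis using npaths_unfold_out[OF assms, of u u] by simp
qed

lemma rtrancl_imp_npaths_pos:
  assumes acyc: "acyclic (set_mset A)" and "(u,v) \<in> (set_mset A)\<^sup>*" shows "npaths A u v \<ge> 1"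
  using assms(2)
proof (induction rule: converse_rtrancl_induct)
  case base thus ?case using npaths_refl[OF acyc] by simp
next
  case (step u c)
  hence "c \<in> children A u" "count A (u,c) \<ge> 1" by (auto simp: children_def)
  hence "1 \<le> count A (u,c) * npaths A c v" using step.IH by (simp add: Suc_le_eq)
  also have "\<dots> \<le> (\<Sum>c\<in>children A u. count A (u,c) * npaths A c v)"
    by (rule member_le_sum) (use \<open>c \<in> children A u\<close> finite_children in auto)
  finally show ?case using npaths_unfold_out[OF acyc, of u v] by linarith
qed

lemma npaths_to_parentless:
  assumes "acyclic (set_mset A)" "parents A x = {}"
  shows "npaths A u x = (if u = x then 1 else 0)"
proof (cases "u = x")
  case True thus ?thesis using npaths_refl[OF assms(1)] by simp
next
  case False
  have "npaths A u x = 0"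
  proof (rule ccontr)
    assume "npaths A u x \<noteq> 0"
    hence "(u,x) \<in> (set_mset A)\<^sup>+" using False npaths_nonzero_imp_rtrancl by (metis rtranclD)
    then obtain w where "(w,x) \<in> set_mset A" using tranclD2 by metis
    thus False using assms(2) by (simp add: parents_def)
  qed
  thus ?thesis using False by simp
qed

lemma npaths_from_childless:
  "acyclic (set_mset A) \<Longrightarrow> children A u = {} \<Longrightarrow> npaths A u x = (if u = x then 1 else 0)"
  using npaths_unfold_out[of A u x] by simp

text \<open>The arc-deletion formula: a path either avoids the deleted arc \<open>(a,b)\<close> or uses it exactly
  once, splitting into a path to \<open>a\<close> and a path from \<open>b\<close>.\<close>

lemma npaths_remove_arc:
  assumes acyc: "acyclic (set_mset A)" and ab: "(a,b) \<in># A"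
  defines "B \<equiv> A - {#(a,b)#}"
  shows "npaths A u x = npaths B u x + npaths B u a * npaths B b x"
proof -
  have BA: "B \<subseteq># A" unfolding B_def by simp
  have acyc_B: "acyclic (set_mset B)" by (rule acyclic_submset[OF acyc BA])
  define T where "T = snd ` set_mset A"
  have finT: "finite T" unfolding T_def by simp
  have TA: "children A u \<subseteq> T" for u unfolding T_def children_def by force
  have TB: "children B u \<subseteq> T" for u
    using TA[of u] mset_subset_eqD[OF BA] by (auto simp: children_def)
  have bT: "b \<in> T" unfolding T_def using ab by force
  have cnt: "count A (u,c) = count B (u,c) + (if (u,c) = (a,b) then 1 else 0)" for u c
    using ab unfolding B_def by (simp add: count_diff)
  have no_back: "npaths B b a = 0"
  proof (rule ccontr)
    assume "npaths B b a \<noteq> 0"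
    hence "(b,a) \<in> (set_mset B)\<^sup>*" by (rule npaths_nonzero_imp_rtrancl)
    hence "(b,a) \<in> (set_mset A)\<^sup>*" using rtrancl_mono[OF set_mset_mono[OF BA]] by blast
    thus False using acyclic_arc_rtrancl_contr[OF acyc] ab by blast
  qed
  have split: "(\<Sum>c\<in>T. count A (u,c) * g c) = (\<Sum>c\<in>T. count B (u,c) * g c) + (if u = a then g b else 0)"
    for u g
  proof -
    have "(\<Sum>c\<in>T. count A (u,c) * g c)
        = (\<Sum>c\<in>T. count B (u,c) * g c) + (\<Sum>c\<in>T. if c = b \<and> u = a then g c else 0)"
      unfolding sum.distrib[symmetric] by (rule sum.cong) (auto simp: cnt)
    also have "(\<Sum>c\<in>T. if c = b \<and> u = a then g c else 0) = (if u = a then g b else 0)"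
      using bT finT by (cases "u = a") (simp_all add: sum.delta)
    finally show ?thesis .
  qed
  have wf: "wf ((set_mset A)\<inverse>)" by (rule finite_acyclic_wf_converse) (use acyc in auto)
  show ?thesis
  proof (induction u rule: wf_induct_rule[OF wf])
    case (1 u)
    have IH: "count A (u,c) * npaths A c x = count A (u,c) * (npaths B c x + npaths B c a * npaths B b x)"
      for c
      using 1 by (cases "(u,c) \<in># A") (auto simp: not_in_iff)
    have "npaths A u x = (if u = x then 1 else 0) + (\<Sum>c\<in>T. count A (u,c) * npaths A c x)"
      by (rule npaths_unfold_out_superset[OF acyc finT TA])
    also have "(\<Sum>c\<in>T. count A (u,c) * npaths A c x)
       = (\<Sum>c\<in>T. count A (u,c) * npaths B c x) + (\<Sum>c\<in>T. count A (u,c) * npaths B c a) * npaths B b x"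
    proof -
      have "(\<Sum>c\<in>T. count A (u,c) * npaths A c x)
          = (\<Sum>c\<in>T. count A (u,c) * npaths B c x + (count A (u,c) * npaths B c a) * npaths B b x)"
        by (rule sum.cong[OF refl]) (subst IH, simp add: algebra_simps)
      thus ?thesis by (simp add: sum.distrib sum_distrib_right)
    qed
    also have "\<dots> = (\<Sum>c\<in>T. count B (u,c) * npaths B c x) + (if u = a then npaths B b x else 0)
         + ((\<Sum>c\<in>T. count B (u,c) * npaths B c a) + (if u = a then npaths B b a else 0)) * npaths B b x"
      by (simp only: split)
    also have "(if u = x then 1 else 0) + \<dots> = ((if u = x then 1 else 0) + (\<Sum>c\<in>T. count B (u,c) * npaths B c x))
       + ((if u = a then 1 else 0) + (\<Sum>c\<in>T. count B (u,c) * npaths B c a)) * npaths B b x"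
      using no_back by (simp add: algebra_simps)
    also have "\<dots> = npaths B u x + npaths B u a * npaths B b x"
      using npaths_unfold_out_superset[OF acyc_B finT TB, of u x]
        npaths_unfold_out_superset[OF acyc_B finT TB, of u a] by (simp only:)
    finally show ?case .
  qed
qed

corollary npaths_add_arc:
  assumes "acyclic (set_mset (B + {#(a,b)#}))"
  shows "npaths (B + {#(a,b)#}) u x = npaths B u x + npaths B u a * npaths B b x"
  using npaths_remove_arc[OF assms, of a b u x] by simp

lemma npaths_unfold_in:
  assumes "acyclic (set_mset A)" "finite T" "parents A v \<subseteq> T"
  shows "npaths A u v = (if u = v then 1 else 0) + (\<Sum>w\<in>T. count A (w,v) * npaths A u w)"
  using assms
proof (induction "size (filter_mset (\<lambda>e. snd e = v) A)" arbitrary: A)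
  case 0
  have no_in: "(w,v) \<notin># A" for w
  proof
    assume "(w,v) \<in># A"
    hence "(w,v) \<in># filter_mset (\<lambda>e. snd e = v) A" by simp
    moreover have "filter_mset (\<lambda>e. snd e = v) A = {#}" using "0.hyps"[symmetric] by simp
    ultimately show False by simp
  qed
  hence "parents A v = {}" by (simp add: parents_def)
  thus ?case using npaths_to_parentless[OF "0.prems"(1)] no_in by (simp add: not_in_iff)
next
  case (Suc k)
  have "filter_mset (\<lambda>e. snd e = v) A \<noteq> {#}"
    using Suc.hyps(2)[symmetric] by (intro notI) simp
  then obtain e where "e \<in># filter_mset (\<lambda>e. snd e = v) A" by blast
  then obtain w0 where w0: "(w0,v) \<in># A" by (cases e) auto
  define B where "B = A - {#(w0,v)#}"
  have BA: "B \<subseteq># A" unfolding B_def by simp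
  have acyc_B: "acyclic (set_mset B)" by (rule acyclic_submset[OF Suc.prems(1) BA])
  have "filter_mset (\<lambda>e. snd e = v) B = filter_mset (\<lambda>e. snd e = v) A - {#(w0,v)#}"
    unfolding B_def by (simp add: filter_diff_mset)
  hence "size (filter_mset (\<lambda>e. snd e = v) B) = size (filter_mset (\<lambda>e. snd e = v) A) - 1"
    using w0 by (simp add: size_Diff_singleton)
  hence "size (filter_mset (\<lambda>e. snd e = v) B) = k" using Suc.hyps(2) by linarith
  moreover have "parents B v \<subseteq> T"
    using Suc.prems(3) mset_subset_eqD[OF BA] by (auto simp: parents_def)
  ultimately have IH: "npaths B u v = (if u = v then 1 else 0) + (\<Sum>w\<in>T. count B (w,v) * npaths B u w)"
    using Suc.hyps(1)[OF _ acyc_B Suc.prems(2)] by simp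
  have arc: "npaths A u z = npaths B u z + npaths B u w0 * npaths B v z" for z
    using npaths_remove_arc[OF Suc.prems(1) w0] unfolding B_def by simp
  have no_back: "npaths B v w = 0" if "(w,v) \<in># A" for w
  proof (rule ccontr)
    assume "npaths B v w \<noteq> 0"
    hence "(v,w) \<in> (set_mset B)\<^sup>*" by (rule npaths_nonzero_imp_rtrancl)
    hence "(v,w) \<in> (set_mset A)\<^sup>*" using rtrancl_mono[OF set_mset_mono[OF BA]] by blast
    thus False using acyclic_arc_rtrancl_contr[OF Suc.prems(1)] that by blast
  qed
  have cnt: "count A (w,v) = count B (w,v) + (if w = w0 then 1 else 0)" for w
    using w0 unfolding B_def by (simp add: count_diff)
  have w0T: "w0 \<in> T" using Suc.prems(3) w0 by (auto simp: parents_def)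
  have "(\<Sum>w\<in>T. count A (w,v) * npaths A u w) = (\<Sum>w\<in>T. count A (w,v) * npaths B u w)"
  proof (rule sum.cong[OF refl])
    fix w show "count A (w,v) * npaths A u w = count A (w,v) * npaths B u w"
      using arc[of w] no_back[of w] by (cases "(w,v) \<in># A") (simp_all add: not_in_iff)
  qed
  also have "\<dots> = (\<Sum>w\<in>T. count B (w,v) * npaths B u w + (if w = w0 then npaths B u w else 0))"
    by (rule sum.cong[OF refl]) (simp add: cnt algebra_simps)
  also have "\<dots> = (\<Sum>w\<in>T. count B (w,v) * npaths B u w) + npaths B u w0"
    using Suc.prems(2) w0T by (simp add: sum.distrib sum.delta)
  finally show ?case using IH arc[of v] npaths_refl[OF acyc_B, of v] by simp
qed

lemma mset_set_set_mset_if_count_le_1: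
  assumes "\<forall>e. count M e \<le> 1" shows "mset_set (set_mset M) = M"
proof (rule multiset_eqI)
  fix e
  have "e \<in># M \<Longrightarrow> count M e = 1"
    using assms[rule_format, of e] count_greater_zero_iff[of M e] by linarith
  thus "count (mset_set (set_mset M)) e = count M e" by (cases "e \<in># M") (simp_all add: not_in_iff)
qed

lemma indeg_eq_card_parents: assumes "\<forall>e. count A e \<le> 1" shows "indeg A v = card (parents A v)"
proof -
  let ?M = "filter_mset (\<lambda>(x,y). y = v) A"
  have "\<forall>e. count ?M e \<le> 1" using assms by simp
  hence "size ?M = card (set_mset ?M)" by (metis mset_set_set_mset_if_count_le_1 size_mset_set)
  also have "set_mset ?M = (\<lambda>w. (w,v)) ` parents A v" by (auto simp: parents_def)
  also have "card \<dots> = card (parents A v)" by (rule card_image) (auto simp: inj_on_def)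
  finally show ?thesis by (simp add: indeg_def)
qed

lemma outdeg_eq_card_children: assumes "\<forall>e. count A e \<le> 1" shows "outdeg A v = card (children A v)"
proof -
  let ?M = "filter_mset (\<lambda>(x,y). x = v) A"
  have "\<forall>e. count ?M e \<le> 1" using assms by simp
  hence "size ?M = card (set_mset ?M)" by (metis mset_set_set_mset_if_count_le_1 size_mset_set)
  also have "set_mset ?M = (\<lambda>c. (v,c)) ` children A v" by (auto simp: children_def)
  also have "card \<dots> = card (children A v)" by (rule card_image) (auto simp: inj_on_def)
  finally show ?thesis by (simp add: outdeg_def)
qed

lemma delta_eq_1_iff: "delta S k = 1 \<longleftrightarrow> k \<in> S"
  by (simp add: delta_def)

text \<open>The vector \<open>\<delta>\<^sub>i\<^sub>j\<close> of a cherry itself violates \<open>\<mu>\<^sub>0 \<ge> \<mu>\<^sub>i\<close>.\<close>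

lemma ms_cherry_not_ms_ret_cherry: "ms_cherry n M (i,j) \<Longrightarrow> \<not> ms_ret_cherry n M (i,j)"
proof
  assume c: "ms_cherry n M (i,j)" and r: "ms_ret_cherry n M (i,j)"
  have ij: "i \<noteq> j" "i \<in> {1..n}" "j \<in> {1..n}" using c by (auto simp: ms_cherry_def)
  have "count M (delta {i,j}) = 1" using c by (simp add: ms_cherry_def)
  hence m: "delta {i,j} \<in># M" by (simp add: count_greater_zero_iff[symmetric])
  have d1: "delta {i,j} \<noteq> delta {i}"
  proof
    assume "delta {i,j} = delta {i}" hence "delta {i,j} j = delta {i} j" by simp
    thus False using ij by (simp add: delta_def)
  qed
  have d2: "delta {i,j} \<noteq> delta {j}"
  proof
    assume "delta {i,j} = delta {j}" hence "delta {i,j} i = delta {j} i" by simp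
    thus False using ij by (simp add: delta_def)
  qed
  have "delta {i,j} i \<le> delta {i,j} 0" using r m d1 d2 by (auto simp: ms_ret_cherry_def)
  thus False using ij by (auto simp: delta_def)
qed

section \<open>Basic structure of a network\<close>

locale network =
  fixes n :: nat and X :: "nat set" and V :: "'v pnode set"
    and A :: "('v pnode \<times> 'v pnode) multiset"
  assumes is_net: "is_network n X (V,A)"
begin

lemma finite_nodes: "finite V"
  and labels_subset: "X \<subseteq> {1..n}"
  and arc_nodes: "(u,v) \<in># A \<Longrightarrow> u \<in> V \<and> v \<in> V"
  and no_parallel_arcs: "\<forall>e. count A e \<le> 1"
  and acyclic_arcs: "acyclic (set_mset A)"
  and ex1_root: "\<exists>!r. r \<in> V \<and> indeg A r = 0"
  and node_kinds: "v \<in> V \<Longrightarrow>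
     is_root_node (V,A) v \<or> is_leaf_node (V,A) v \<or> is_tree_node (V,A) v \<or> is_ret_node (V,A) v"
  and leaf_nodes_eq: "{v \<in> V. is_leaf_node (V,A) v} = Leaf ` X"
  and Leaf_nodes_eq: "V \<inter> range Leaf = Leaf ` X"
  using is_net by (auto simp: is_network_def Let_def)

lemma label_nonzero: "k \<in> X \<Longrightarrow> k \<noteq> 0"
  using labels_subset by auto

lemma child_mem_nodes: "c \<in> children A u \<Longrightarrow> c \<in> V"
  using arc_nodes by (auto simp: children_def)

lemma parent_mem_nodes: "w \<in> parents A u \<Longrightarrow> w \<in> V"
  using arc_nodes by (auto simp: parents_def)

lemma indeg_eq_card: "indeg A v = card (parents A v)"
  and outdeg_eq_card: "outdeg A v = card (children A v)"
  by (rule indeg_eq_card_parents[OF no_parallel_arcs], rule outdeg_eq_card_children[OF no_parallel_arcs])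

lemma root_node_iff: "is_root_node (V,A) v \<longleftrightarrow> v \<in> V \<and> parents A v = {} \<and> (\<exists>c. children A v = {c})"
  and leaf_node_iff: "is_leaf_node (V,A) v \<longleftrightarrow> v \<in> V \<and> (\<exists>p. parents A v = {p}) \<and> children A v = {}"
  and tree_node_iff: "is_tree_node (V,A) v \<longleftrightarrow>
     v \<in> V \<and> (\<exists>p. parents A v = {p}) \<and> (\<exists>a b. children A v = {a,b} \<and> a \<noteq> b)"
  and ret_node_iff: "is_ret_node (V,A) v \<longleftrightarrow>
     v \<in> V \<and> (\<exists>p q. parents A v = {p,q} \<and> p \<noteq> q) \<and> (\<exists>c. children A v = {c})"
  by (simp_all add: is_root_node_def is_leaf_node_def is_tree_node_def is_ret_node_def
      indeg_eq_card outdeg_eq_card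
      card_1_singleton_iff card_2_iff finite_parents finite_children)

lemma ret_not_tree: "is_ret_node (V,A) v \<Longrightarrow> \<not> is_tree_node (V,A) v"
  and ret_not_leaf: "is_ret_node (V,A) v \<Longrightarrow> \<not> is_leaf_node (V,A) v"
  and tree_not_leaf: "is_tree_node (V,A) v \<Longrightarrow> \<not> is_leaf_node (V,A) v"
  by (simp_all add: is_ret_node_def is_tree_node_def is_leaf_node_def)

lemma leaf_node_iff_Leaf: "is_leaf_node (V,A) v \<longleftrightarrow> v \<in> Leaf ` X"
  using leaf_nodes_eq by (auto simp: is_leaf_node_def)

lemma Leaf_mem_nodes_iff: "Leaf k \<in> V \<longleftrightarrow> k \<in> X"
  using Leaf_nodes_eq by auto

lemma parents_leaf: "is_leaf_node (V,A) v \<Longrightarrow> parents A v = {par A v}"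
  using par_eq unfolding leaf_node_iff by fastforce

lemma children_leaf: "is_leaf_node (V,A) v \<Longrightarrow> children A v = {}"
  using leaf_node_iff by blast

lemma parents_Leaf: "x \<in> X \<Longrightarrow> parents A (Leaf x) = {par A (Leaf x)}"
  using parents_leaf leaf_node_iff_Leaf by blast

lemma Leaf_child_label: "Leaf x \<in> children A u \<Longrightarrow> x \<in> X"
  using child_mem_nodes Leaf_mem_nodes_iff by blast

lemma child_Leaf_if_not_tree_ret:
  assumes "c \<in> children A u" "\<not> is_tree_node (V,A) c" "\<not> is_ret_node (V,A) c"
  shows "\<exists>x\<in>X. c = Leaf x"
proof -
  have "\<not> is_root_node (V,A) c" using assms(1) by (auto simp: root_node_iff child_iff_parent)
  hence "is_leaf_node (V,A) c" using node_kinds[OF child_mem_nodes[OF assms(1)]] assms(2,3) by blast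
  thus ?thesis using leaf_node_iff_Leaf by blast
qed

lemma npaths_step_children: "npaths A u x = (if u = x then 1 else 0) + (\<Sum>c\<in>children A u. npaths A c x)"
proof -
  have "count A (u,c) = 1" if "c \<in> children A u" for c
    using that no_parallel_arcs count_greater_zero_iff[of A "(u,c)"]
    by (auto simp: children_def intro: antisym)
  thus ?thesis using npaths_unfold_out[OF acyclic_arcs, of u x] by simp
qed

lemma npaths_step_parents: "npaths A u x = (if u = x then 1 else 0) + (\<Sum>w\<in>parents A x. npaths A u w)"
proof -
  have "count A (w,x) = 1" if "w \<in> parents A x" for w
    using that no_parallel_arcs count_greater_zero_iff[of A "(w,x)"]
    by (auto simp: parents_def intro: antisym)
  thus ?thesis using npaths_unfold_in[OF acyclic_arcs finite_parents subset_refl, of u x] by simp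
qed

lemma npaths_child_le: "c \<in> children A u \<Longrightarrow> npaths A c x \<le> npaths A u x"
  using member_le_sum[of c "children A u"
    "\<lambda>c. npaths A c x"] finite_children npaths_step_children[of u x]
  by fastforce

lemma npaths_parent_le: "w \<in> parents A v \<Longrightarrow> npaths A u w \<le> npaths A u v"
  using member_le_sum[of w "parents A v"
    "\<lambda>w. npaths A u w"] finite_parents npaths_step_parents[of u v]
  by fastforce

lemma reaches_some_leaf: "v \<in> V \<Longrightarrow> \<exists>k\<in>X. npaths A v (Leaf k) \<ge> 1"
proof -
  have wf: "wf ((set_mset A)\<inverse>)" by (rule finite_acyclic_wf_converse) (use acyclic_arcs in auto)
  show "v \<in> V \<Longrightarrow> \<exists>k\<in>X. npaths A v (Leaf k) \<ge> 1"
  proof (induction v rule: wf_induct_rule[OF wf])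
    case (1 v)
    show ?case
    proof (cases "children A v = {}")
      case True
      hence "is_leaf_node (V,A) v"
        using node_kinds[OF "1.prems"] by (auto simp: root_node_iff tree_node_iff ret_node_iff)
      then obtain k where "k \<in> X" "v = Leaf k" using leaf_node_iff_Leaf by blast
      thus ?thesis using npaths_refl[OF acyclic_arcs] by (intro bexI[where x=k]) simp_all
    next
      case False
      then obtain c where c: "c \<in> children A v" by blast
      hence "(c,v) \<in> (set_mset A)\<inverse>" by (simp add: children_def)
      from "1.IH"[OF this child_mem_nodes[OF c]] obtain k where "k \<in> X" "npaths A c (Leaf k) \<ge> 1"
        by blast
      thus ?thesis using npaths_child_le[OF c, of "Leaf k"] by force
    qed
  qed
qed

definition the_root :: "'v pnode" where
  "the_root = (THE r. r \<in> V \<and> indeg A r = 0)"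

lemma the_root_mem_nodes: "the_root \<in> V" and parents_the_root: "parents A the_root = {}"
proof -
  have "the_root \<in> V \<and> indeg A the_root = 0" unfolding the_root_def by (rule theI'[OF ex1_root])
  thus "the_root \<in> V" "parents A the_root = {}"
    using indeg_eq_card_parents[OF no_parallel_arcs] finite_parents[of A the_root] by auto
qed

lemma the_root_unique: "v \<in> V \<Longrightarrow> parents A v = {} \<Longrightarrow> v = the_root"
  using ex1_root the_root_mem_nodes parents_the_root indeg_eq_card_parents[OF no_parallel_arcs]
    by auto

lemma the_root_reaches: "v \<in> V \<Longrightarrow> (the_root, v) \<in> (set_mset A)\<^sup>*"
proof -
  have wf: "wf (set_mset A)" by (rule finite_acyclic_wf) (use acyclic_arcs in auto)
  show "v \<in> V \<Longrightarrow> (the_root, v) \<in> (set_mset A)\<^sup>*"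
  proof (induction v rule: wf_induct_rule[OF wf])
    case (1 v)
    show ?case
    proof (cases "parents A v = {}")
      case True thus ?thesis using the_root_unique[OF "1.prems"] by simp
    next
      case False
      then obtain w where w: "w \<in> parents A v" by blast
      hence wv: "(w,v) \<in> set_mset A" by (simp add: parents_def)
      with "1.IH"[OF wv parent_mem_nodes[OF w]] show ?thesis by simp
    qed
  qed
qed

lemma root_node_the_root: "is_root_node (V,A) the_root"
  using node_kinds[OF the_root_mem_nodes] parents_the_root
  by (auto simp: leaf_node_iff tree_node_iff ret_node_iff)

definition root_child :: "'v pnode" where
  "root_child = (THE c. children A the_root = {c})"

lemma children_the_root: "children A the_root = {root_child}"
proof -
  obtain c where "children A the_root = {c}" using root_node_the_root unfolding root_node_iff
    by blast
  thus ?thesis unfolding root_child_def by simp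
qed

lemma root_child_mem_nodes: "root_child \<in> V"
  using children_the_root child_mem_nodes by auto

lemma root_child_reaches: "v \<in> V \<Longrightarrow> v \<noteq> the_root \<Longrightarrow> (root_child, v) \<in> (set_mset A)\<^sup>*"
proof -
  assume v: "v \<in> V" "v \<noteq> the_root"
  hence "(the_root, v) \<in> (set_mset A)\<^sup>+"
    using the_root_reaches[OF v(1)] by (simp add: rtrancl_eq_or_trancl)
  then obtain y where y: "(the_root,y) \<in> set_mset A" "(y,v) \<in> (set_mset A)\<^sup>*" using tranclD by metis
  have "y = root_child" using y(1) children_the_root by (auto simp: children_def)
  thus ?thesis using y by simp
qed

text \<open>A reticulation has a parent other than the root, which the root child reaches; so the
  root child cannot be a reticulation without closing a cycle.\<close>

lemma root_child_not_ret: "\<not> is_ret_node (V,A) root_child"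
proof
  assume "is_ret_node (V,A) root_child"
  then obtain z where z: "z \<in> parents A root_child" "z \<noteq> the_root" by (force simp: ret_node_iff)
  have "(root_child, z) \<in> (set_mset A)\<^sup>*"
    using root_child_reaches[OF parent_mem_nodes[OF z(1)] z(2)] .
  moreover have "(z, root_child) \<in> set_mset A" using z by (simp add: parents_def)
  ultimately show False using acyclic_arc_rtrancl_contr[OF acyclic_arcs] by blast
qed

lemma root_child_not_root: "\<not> is_root_node (V,A) root_child"
  using children_the_root child_iff_parent[of root_child A the_root] by (auto simp: root_node_iff)

lemma V_H_eq: "V_H (V,A) = {v \<in> V. is_ret_node (V,A) v}"
  and V_T_eq: "V_T (V,A) = {v \<in> V. is_leaf_node (V,A) v \<or> is_tree_node (V,A) v}"
  by (simp_all add: V_H_def V_T_def)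

lemma finite_V_H: "finite (V_H (V,A))" and finite_V_T: "finite (V_T (V,A))"
  using finite_nodes by (simp_all add: V_H_eq V_T_eq)

lemma ret_mem_V_H: "is_ret_node (V,A) h \<Longrightarrow> h \<in> V_H (V,A)"
  and tree_mem_V_T: "is_tree_node (V,A) u \<Longrightarrow> u \<in> V_T (V,A)"
  by (simp_all add: V_H_eq V_T_eq is_ret_node_def is_tree_node_def)

lemma Leaf_mem_V_T: "x \<in> X \<Longrightarrow> Leaf x \<in> V_T (V,A)"
  using leaf_node_iff_Leaf by (auto simp: V_T_eq is_leaf_node_def)

lemma mu_vec_0: "mu_vec n (V,A) u 0 = (\<Sum>h\<in>V_H (V,A). npaths A u h)"
  by (simp add: mu_vec_def)

lemma mu_vec_label: "k \<noteq> 0 \<Longrightarrow> mu_vec n (V,A) u k = (if k \<in> X then npaths A u (Leaf k) else 0)"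
  using labels_subset by (auto simp: mu_vec_def Leaf_mem_nodes_iff)

lemma npaths_ret_le_mu_0: "h \<in> V_H (V,A) \<Longrightarrow> npaths A u h \<le> mu_vec n (V,A) u 0"
  unfolding mu_vec_0 by (rule member_le_sum) (use finite_V_H in auto)

definition own_mu :: "'v pnode \<Rightarrow> nat \<Rightarrow> nat" where
  "own_mu u k = (if k = 0 then (if u \<in> V_H (V,A) then 1 else 0)
                 else if k \<in> X \<and> u = Leaf k then 1 else 0)"

lemma mu_vec_unfold: "mu_vec n (V,A) u k = own_mu u k + (\<Sum>c\<in>children A u. mu_vec n (V,A) c k)"
proof (cases "k = 0")
  case True
  have "(\<Sum>h\<in>V_H (V,A). npaths A u h)
      = (\<Sum>h\<in>V_H (V,A). if u = h then 1 else 0) + (\<Sum>h\<in>V_H (V,A). \<Sum>c\<in>children A u. npaths A c h)"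
    by (subst npaths_step_children) (rule sum.distrib)
  also have "\<dots> = (if u \<in> V_H (V,A) then 1 else 0) + (\<Sum>c\<in>children A u. \<Sum>h\<in>V_H (V,A). npaths A c h)"
    using finite_V_H by (simp add: sum.delta sum.swap[of _ "V_H (V,A)"])
  finally show ?thesis using True by (simp add: mu_vec_0 own_mu_def)
next
  case False
  thus ?thesis using npaths_step_children[of u "Leaf k"] by (auto simp: mu_vec_label own_mu_def)
qed

lemma mu_child_le: "c \<in> children A u \<Longrightarrow> mu_vec n (V,A) c k \<le> mu_vec n (V,A) u k"
  using member_le_sum[of c "children A u" "\<lambda>c. mu_vec n (V,A) c k"] finite_children
    mu_vec_unfold[of u k] by fastforce

lemma own_mu_le: "own_mu u k \<le> mu_vec n (V,A) u k"
  using mu_vec_unfold[of u k] by linarith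

lemma own_mu_tree: "is_tree_node (V,A) u \<Longrightarrow> own_mu u k = 0"
  using ret_not_tree tree_not_leaf leaf_node_iff_Leaf by (auto simp: own_mu_def V_H_eq)

lemma own_mu_ret: "is_ret_node (V,A) u \<Longrightarrow> own_mu u k = (if k = 0 then 1 else 0)"
  using ret_not_leaf leaf_node_iff_Leaf by (auto simp: own_mu_def V_H_eq is_ret_node_def)

lemma own_mu_Leaf: "x \<in> X \<Longrightarrow> own_mu (Leaf x) k = (if k = x then 1 else 0)"
  using leaf_node_iff_Leaf ret_not_leaf label_nonzero by (auto simp: own_mu_def V_H_eq)

lemma mu_vec_Leaf: "x \<in> X \<Longrightarrow> mu_vec n (V,A) (Leaf x) = delta {x}"
proof
  fix k assume x: "x \<in> X"
  have "children A (Leaf x) = {}" using x children_leaf leaf_node_iff_Leaf by blast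
  thus "mu_vec n (V,A) (Leaf x) k = delta {x} k"
    using mu_vec_unfold[of "Leaf x" k] own_mu_Leaf[OF x, of k] by (simp add: delta_def)
qed

lemma mu_vec_tree: "is_tree_node (V,A) u \<Longrightarrow> children A u = {a,b} \<Longrightarrow> a \<noteq> b \<Longrightarrow>
   mu_vec n (V,A) u k = mu_vec n (V,A) a k + mu_vec n (V,A) b k"
  using mu_vec_unfold[of u k] own_mu_tree[of u k] by simp

lemma mu_vec_ret: "is_ret_node (V,A) u \<Longrightarrow> children A u = {c} \<Longrightarrow>
   mu_vec n (V,A) u k = (if k = 0 then 1 else 0) + mu_vec n (V,A) c k"
  using mu_vec_unfold[of u k] own_mu_ret[of u k] by simp

lemma ret_mu_0_pos: "is_ret_node (V,A) c \<Longrightarrow> mu_vec n (V,A) c 0 \<ge> 1"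
  using own_mu_le[of c 0] own_mu_ret[of c 0] by simp

lemma mem_mu_net_iff: "\<mu> \<in># mu_net n (V,A) \<longleftrightarrow> (\<exists>u\<in>V_T (V,A). \<mu> = mu_vec n (V,A) u)"
  using finite_V_T by (auto simp: mu_net_def)

lemma count_mu_net: "count (mu_net n (V,A)) \<mu> = card {u\<in>V_T (V,A). mu_vec n (V,A) u = \<mu>}"
proof -
  have "count (mu_net n (V,A)) \<mu> = (\<Sum>u \<in> mu_vec n (V,A) -` {\<mu>} \<inter> V_T (V,A). 1)"
    unfolding mu_net_def count_image_mset using finite_V_T by (simp add: count_mset_set)
  thus ?thesis by (simp add: Int_commute vimage_def Collect_conj_eq)
qed

section \<open>The vectors \<open>\<delta>\<^sub>i\<^sub>j\<close> and \<open>\<delta>\<^sub>0\<^sub>i\<^sub>j\<close> locate the reducible pairs\<close>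

lemma mu_pair_ge_1:
  assumes "c \<in> V" and "\<forall>k\<in>X. k \<noteq> i \<and> k \<noteq> j \<longrightarrow> mu_vec n (V,A) c k = 0"
  shows "mu_vec n (V,A) c i + mu_vec n (V,A) c j \<ge> 1"
proof -
  obtain k where k: "k \<in> X" "npaths A c (Leaf k) \<ge> 1" using reaches_some_leaf[OF assms(1)] by blast
  hence "mu_vec n (V,A) c k \<ge> 1" using label_nonzero[OF k(1)] by (simp add: mu_vec_label)
  moreover have "k = i \<or> k = j" using assms(2) k(1) calculation by auto
  ultimately show ?thesis by auto
qed

lemma tree_mu_pair_ge_2:
  assumes t: "is_tree_node (V,A) c" and off: "\<forall>k\<in>X. k \<noteq> i \<and> k \<noteq> j \<longrightarrow> mu_vec n (V,A) c k = 0"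
  shows "mu_vec n (V,A) c i + mu_vec n (V,A) c j \<ge> 2"
proof -
  obtain a b where ab: "children A c = {a,b}" "a \<noteq> b" using t unfolding tree_node_iff by blast
  have "mu_vec n (V,A) d i + mu_vec n (V,A) d j \<ge> 1" if d: "d \<in> {a,b}" for d
  proof (rule mu_pair_ge_1)
    show "d \<in> V" using d ab child_mem_nodes by auto
    show "\<forall>k\<in>X. k \<noteq> i \<and> k \<noteq> j \<longrightarrow> mu_vec n (V,A) d k = 0"
      using off mu_child_le[of d c] d ab by (metis insert_iff le_zero_eq)
  qed
  from this[of a] this[of b] show ?thesis
    using mu_vec_tree[OF t ab, of i] mu_vec_tree[OF t ab, of j] by simp
qed

lemma tree_children_mu_pair:
  assumes t: "is_tree_node (V,A) u" and ab: "children A u = {a,b}" "a \<noteq> b"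
    and off: "\<forall>k\<in>X. k \<noteq> i \<and> k \<noteq> j \<longrightarrow> mu_vec n (V,A) u k = 0"
    and two: "mu_vec n (V,A) u i + mu_vec n (V,A) u j = 2"
    and c: "c \<in> {a,b}"
  shows "\<forall>k\<in>X. k \<noteq> i \<and> k \<noteq> j \<longrightarrow> mu_vec n (V,A) c k = 0"
    and "mu_vec n (V,A) c i + mu_vec n (V,A) c j = 1"
    and "\<not> is_tree_node (V,A) c"
proof -
  have off_child: "\<forall>k\<in>X. k \<noteq> i \<and> k \<noteq> j \<longrightarrow> mu_vec n (V,A) d k = 0" if "d \<in> {a,b}" for d
    using off mu_child_le[of d u] that ab by (metis insert_iff le_zero_eq)
  have ge1: "mu_vec n (V,A) d i + mu_vec n (V,A) d j \<ge> 1" if "d \<in> {a,b}" for d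
    using mu_pair_ge_1[OF _ off_child[OF that]] that ab child_mem_nodes by auto
  have sum: "(mu_vec n (V,A) a i + mu_vec n (V,A) a j) + (mu_vec n (V,A) b i + mu_vec n (V,A) b j) = 2"
    using two mu_vec_tree[OF t ab, of i] mu_vec_tree[OF t ab, of j] by simp
  show "\<forall>k\<in>X. k \<noteq> i \<and> k \<noteq> j \<longrightarrow> mu_vec n (V,A) c k = 0" using off_child[OF c] .
  show one: "mu_vec n (V,A) c i + mu_vec n (V,A) c j = 1"
    using c ge1[of a] ge1[of b] sum by auto
  show "\<not> is_tree_node (V,A) c" using tree_mu_pair_ge_2[OF _ off_child[OF c]] one by fastforce
qed

lemma mu_delta_pair_imp_cherry_parent:
  assumes u: "u \<in> V_T (V,A)" and mu: "mu_vec n (V,A) u = delta {i,j}"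
    and ij: "i \<noteq> j" "i \<in> {1..n}" "j \<in> {1..n}"
  shows "is_tree_node (V,A) u \<and> children A u = {Leaf i, Leaf j}"
proof -
  let ?m = "mu_vec n (V,A)"
  have du: "?m u k = (if k = i \<or> k = j then 1 else 0)" for k
    using fun_cong[OF mu, of k] by (simp add: delta_def)
  have t: "is_tree_node (V,A) u"
  proof (rule ccontr)
    assume "\<not> ?thesis"
    hence "is_leaf_node (V,A) u" using u by (simp add: V_T_eq)
    then obtain x where x: "x \<in> X" "u = Leaf x" using leaf_node_iff_Leaf by blast
    have "delta {x} i = 1" "delta {x} j = 1"
      using du[of i] du[of j] mu_vec_Leaf[OF x(1)] x(2) by simp_all
    hence "i \<in> {x}" "j \<in> {x}" by (simp_all only: delta_eq_1_iff)
    with ij(1) show False by simp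
  qed
  obtain a b where ab: "children A u = {a,b}" "a \<noteq> b" using t unfolding tree_node_iff by blast
  have off: "\<forall>k\<in>X. k \<noteq> i \<and> k \<noteq> j \<longrightarrow> ?m u k = 0" using du by simp
  have two: "?m u i + ?m u j = 2" using du ij(1) by simp
  have leaf: "\<exists>x. c = Leaf x \<and> (x = i \<or> x = j)" if c: "c \<in> {a,b}" for c
  proof -
    have cu: "c \<in> children A u" using c ab by simp
    have "?m c 0 = 0" using mu_child_le[OF cu, of 0] du[of 0] ij by simp
    hence "\<not> is_ret_node (V,A) c" using ret_mu_0_pos[of c] by linarith
    then obtain x where x: "x \<in> X" "c = Leaf x"
      using child_Leaf_if_not_tree_ret[OF cu tree_children_mu_pair(3)[OF t ab off two c]] by blast
    have "?m u x \<ge> 1" using mu_child_le[OF cu, of x] mu_vec_Leaf[OF x(1)] x(2)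
      by (simp add: delta_def)
    thus ?thesis using du[of x] x(2) by (auto split: if_splits)
  qed
  obtain xa xb where "a = Leaf xa" "xa = i \<or> xa = j" "b = Leaf xb" "xb = i \<or> xb = j"
    using leaf[of a] leaf[of b] by blast
  hence "{a,b} = {Leaf i, Leaf j}" using ab(2) by auto
  thus ?thesis using t ab by simp
qed

lemma ret_child_of_delta_triple:
  assumes t: "is_tree_node (V,A) u"
    and du: "\<And>k. mu_vec n (V,A) u k = (if k = 0 \<or> k = i \<or> k = j then 1 else 0)"
    and ij: "i \<noteq> j" "i \<in> {1..n}" "j \<in> {1..n}"
    and hb: "children A u = {h,b}" "h \<noteq> b" and rh: "is_ret_node (V,A) h"
      and rb: "\<not> is_ret_node (V,A) b"
  shows "\<exists>x y. children A h = {Leaf x} \<and> b = Leaf y \<and> ((x = i \<and> y = j) \<or> (x = j \<and> y = i))"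
proof -
  let ?m = "mu_vec n (V,A)"
  have i0: "i \<noteq> 0" "j \<noteq> 0" using ij by auto
  have off: "\<forall>k\<in>X. k \<noteq> i \<and> k \<noteq> j \<longrightarrow> ?m u k = 0" using du label_nonzero by fastforce
  have two: "?m u i + ?m u j = 2" using du ij(1) by simp
  note split_h = tree_children_mu_pair[OF t hb off two, of h]
    and split_b = tree_children_mu_pair[OF t hb off two, of b]
  obtain y where y: "y \<in> X" "b = Leaf y"
    using child_Leaf_if_not_tree_ret[of b u] split_b(3) rb hb by auto
  have "?m u y \<ge> 1" using mu_child_le[of b u y] hb mu_vec_Leaf[OF y(1)] y(2)
    by (simp add: delta_def)
  hence yij: "y = i \<or> y = j" using du[of y] label_nonzero[OF y(1)] by (simp split: if_splits)
  obtain c where c: "children A h = {c}" using rh unfolding ret_node_iff by blast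
  have mh: "?m h k = (if k = 0 then 1 else 0) + ?m c k" for k by (rule mu_vec_ret[OF rh c])
  have "?m h 0 \<le> 1" using mu_child_le[of h u 0] hb du[of 0] by simp
  hence "\<not> is_ret_node (V,A) c" using mh[of 0] by (auto dest: ret_mu_0_pos)
  moreover have "\<not> is_tree_node (V,A) c"
  proof
    assume "is_tree_node (V,A) c"
    moreover have "\<forall>k\<in>X. k \<noteq> i \<and> k \<noteq> j \<longrightarrow> ?m c k = 0" using split_h(1) mh label_nonzero by simp
    ultimately have "?m c i + ?m c j \<ge> 2" by (rule tree_mu_pair_ge_2)
    thus False using split_h(2) mh[of i] mh[of j] i0 by simp
  qed
  ultimately obtain x where x: "x \<in> X" "c = Leaf x" using child_Leaf_if_not_tree_ret[of c h] c
    by auto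
  have mhx: "?m h x \<ge> 1" using mh[of x] mu_vec_Leaf[OF x(1)] x(2) by (simp add: delta_def)
  hence "?m u x \<ge> 1" using mu_child_le[of h u x] hb by simp
  hence xij: "x = i \<or> x = j" using du[of x] label_nonzero[OF x(1)] by (simp split: if_splits)
  have "?m u x = ?m h x + ?m b x" by (rule mu_vec_tree[OF t hb])
  moreover have "?m b x = (if x = y then 1 else 0)" using mu_vec_Leaf[OF y(1)] y(2)
    by (simp add: delta_def)
  moreover have "?m u x \<le> 1" using du[of x] by simp
  ultimately have "x \<noteq> y" using mhx by (auto split: if_splits)
  thus ?thesis using xij yij c x y by blast
qed

text \<open>Of the two children of a node with \<open>\<mu> = \<delta>\<^sub>0\<^sub>i\<^sub>j\<close> exactly one is a reticulation, because
  their \<open>\<mu>\<^sub>0\<close>-entries add up to 1 and leaves have \<open>\<mu>\<^sub>0 = 0\<close>.\<close>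

lemma mu_delta_triple_imp_ret_cherry_grandparent:
  assumes u: "u \<in> V_T (V,A)" and mu: "mu_vec n (V,A) u = delta {0,i,j}"
    and ij: "i \<noteq> j" "i \<in> {1..n}" "j \<in> {1..n}"
  shows "is_tree_node (V,A) u \<and> (\<exists>h. is_ret_node (V,A) h \<and>
     ((children A u = {h, Leaf j} \<and> children A h = {Leaf i}) \<or>
      (children A u = {h, Leaf i} \<and> children A h = {Leaf j})))"
proof -
  let ?m = "mu_vec n (V,A)"
  have du: "?m u k = (if k = 0 \<or> k = i \<or> k = j then 1 else 0)" for k
    using fun_cong[OF mu, of k] by (simp add: delta_def)
  have Leaf_mu_0: "?m (Leaf x) 0 = 0" if "x \<in> X" for x
    using mu_vec_Leaf[OF that] label_nonzero[OF that] by (simp add: delta_def)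
  have t: "is_tree_node (V,A) u"
  proof (rule ccontr)
    assume "\<not> ?thesis"
    hence "is_leaf_node (V,A) u" using u by (simp add: V_T_eq)
    then obtain x where "x \<in> X" "u = Leaf x" using leaf_node_iff_Leaf by blast
    thus False using Leaf_mu_0 du[of 0] by simp
  qed
  obtain a b where ab: "children A u = {a,b}" "a \<noteq> b" using t unfolding tree_node_iff by blast
  have off: "\<forall>k\<in>X. k \<noteq> i \<and> k \<noteq> j \<longrightarrow> ?m u k = 0" using du label_nonzero by fastforce
  have two: "?m u i + ?m u j = 2" using du ij by simp
  have z: "?m a 0 + ?m b 0 = 1" using mu_vec_tree[OF t ab, of 0] du[of 0] by simp
  have leaf_0: "?m c 0 = 0" if c: "c \<in> {a,b}" and nr: "\<not> is_ret_node (V,A) c" for c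
  proof -
    obtain x where "x \<in> X" "c = Leaf x"
      using child_Leaf_if_not_tree_ret[of c u] tree_children_mu_pair(3)[OF t ab off two c] nr c ab by auto
    thus ?thesis using Leaf_mu_0 by simp
  qed
  have "(is_ret_node (V,A) a \<and> \<not> is_ret_node (V,A) b) \<or> (is_ret_node (V,A) b \<and> \<not> is_ret_node (V,A) a)"
    using ret_mu_0_pos[of a] ret_mu_0_pos[of b] leaf_0[of a] leaf_0[of b] z by fastforce
  thus ?thesis
  proof
    assume r: "is_ret_node (V,A) a \<and> \<not> is_ret_node (V,A) b"
    then obtain x y where "children A a = {Leaf x}" "b = Leaf y" "(x = i \<and> y = j) \<or> (x = j \<and> y = i)"
      using ret_child_of_delta_triple[OF t du ij ab] by blast
    thus ?thesis using t r ab by blast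
  next
    assume r: "is_ret_node (V,A) b \<and> \<not> is_ret_node (V,A) a"
    have ab': "children A u = {b,a}" "b \<noteq> a" using ab by auto
    obtain x y where "children A b = {Leaf x}" "a = Leaf y" "(x = i \<and> y = j) \<or> (x = j \<and> y = i)"
      using ret_child_of_delta_triple[OF t du ij ab'] r by blast
    thus ?thesis using t r ab' by blast
  qed
qed

lemma net_cherry_structure:
  assumes nc: "net_cherry (V,A) (i,j)"
  defines "p \<equiv> par A (Leaf i)"
  shows "i \<in> X \<and> j \<in> X \<and> i \<noteq> j \<and> parents A (Leaf i) = {p} \<and> parents A (Leaf j) = {p} \<and> is_tree_node (V,A) p
     \<and> children A p = {Leaf i, Leaf j}"
proof -
  have l: "is_leaf_node (V,A) (Leaf i)" "is_leaf_node (V,A) (Leaf j)" "i \<noteq> j"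
    and pp: "par A (Leaf j) = p"
    using nc by (auto simp: net_cherry_def p_def)
  have x: "i \<in> X" "j \<in> X" using l leaf_node_iff_Leaf by auto
  have ii: "parents A (Leaf i) = {p}" "parents A (Leaf j) = {p}"
    using parents_leaf[OF l(1)] parents_leaf[OF l(2)] pp p_def by auto
  have pV: "p \<in> V" using ii parent_mem_nodes by auto
  have o: "Leaf i \<in> children A p" "Leaf j \<in> children A p" using ii
    by (auto simp: children_def parents_def)
  have "\<not> is_leaf_node (V,A) p" using o children_leaf by blast
  moreover have "\<not> is_root_node (V,A) p" "\<not> is_ret_node (V,A) p"
    using o l(3) root_node_iff ret_node_iff by fastforce+
  ultimately have t: "is_tree_node (V,A) p" using node_kinds[OF pV] by blast
  then obtain a b where ab: "children A p = {a,b}" "a \<noteq> b" unfolding tree_node_iff by blast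
  have "children A p = {Leaf i, Leaf j}" using ab o l(3) by auto
  thus ?thesis using x l(3) ii t by simp
qed

lemma net_ret_cherry_structure:
  assumes nc: "net_ret_cherry (V,A) (i,j)"
  defines "h \<equiv> par A (Leaf i)" and "g \<equiv> par A (Leaf j)"
  shows "i \<in> X \<and> j \<in> X \<and> i \<noteq> j \<and> parents A (Leaf i) = {h} \<and> parents A (Leaf j) = {g} \<and> is_ret_node (V,A) h
     \<and> is_tree_node (V,A) g \<and> children A h = {Leaf i} \<and> children A g = {h, Leaf j} \<and> (g,h) \<in># A
     \<and> h \<noteq> Leaf j \<and> g \<noteq> h"
proof -
  have l: "is_leaf_node (V,A) (Leaf i)" "is_leaf_node (V,A) (Leaf j)" "i \<noteq> j"
    and rh: "is_ret_node (V,A) h" and tg: "is_tree_node (V,A) g" and gh: "(g,h) \<in># A"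
    using nc by (auto simp: net_ret_cherry_def h_def g_def)
  have x: "i \<in> X" "j \<in> X" using l leaf_node_iff_Leaf by auto
  have ii: "parents A (Leaf i) = {h}" "parents A (Leaf j) = {g}"
    using parents_leaf[OF l(1)] parents_leaf[OF l(2)] h_def g_def by auto
  have oh: "Leaf i \<in> children A h" "Leaf j \<in> children A g" "h \<in> children A g"
    using ii gh by (auto simp: children_def parents_def)
  obtain c where c: "children A h = {c}" using rh unfolding ret_node_iff by blast
  have ohi: "children A h = {Leaf i}" using c oh by auto
  have hLj: "h \<noteq> Leaf j" using rh l(2) ret_not_leaf by blast
  obtain a b where ab: "children A g = {a,b}" "a \<noteq> b" using tg unfolding tree_node_iff by blast
  have og: "children A g = {h, Leaf j}" using ab oh hLj by auto
  have "g \<noteq> h" using rh tg ret_not_tree by blast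
  thus ?thesis using x l(3) ii rh tg ohi og gh hLj by simp
qed

lemma mu_vec_cherry_parent:
  assumes "net_cherry (V,A) (i,j)" shows "mu_vec n (V,A) (par A (Leaf i)) = delta {i,j}"
proof
  fix k
  have x: "i \<in> X" "j \<in> X" "i \<noteq> j" and t: "is_tree_node (V,A) (par A (Leaf i))"
    and c: "children A (par A (Leaf i)) = {Leaf i, Leaf j}"
    using net_cherry_structure[OF assms] by auto
  show "mu_vec n (V,A) (par A (Leaf i)) k = delta {i,j} k"
    using mu_vec_tree[OF t c, of k] mu_vec_Leaf[OF x(1)] mu_vec_Leaf[OF x(2)] x(3)
    by (simp add: delta_def)
qed

lemma mu_vec_ret_cherry_grandparent:
  assumes "net_ret_cherry (V,A) (i,j)" shows "mu_vec n (V,A) (par A (Leaf j)) = delta {0,i,j}"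
proof
  fix k
  define h where "h = par A (Leaf i)"
  define g where "g = par A (Leaf j)"
  have x: "i \<in> X" "j \<in> X" "i \<noteq> j" and rh: "is_ret_node (V,A) h" and tg: "is_tree_node (V,A) g"
    and oh: "children A h = {Leaf i}" and og: "children A g = {h, Leaf j}" and hLj: "h \<noteq> Leaf j"
    using net_ret_cherry_structure[OF assms] unfolding h_def g_def by auto
  show "mu_vec n (V,A) g k = delta {0,i,j} k"
    using mu_vec_tree[OF tg og hLj, of k] mu_vec_ret[OF rh oh, of k] mu_vec_Leaf[OF x(1)]
      mu_vec_Leaf[OF x(2)] x(3) label_nonzero[OF x(1)] label_nonzero[OF x(2)]
    by (simp add: delta_def)
qed

lemma ms_cherry_imp_net_cherry:
  assumes ms: "ms_cherry n (mu_net n (V,A)) (i,j)"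
  shows "net_cherry (V,A) (i,j)"
proof -
  have ij: "i \<noteq> j" "i \<in> {1..n}" "j \<in> {1..n}" and c: "count (mu_net n (V,A)) (delta {i,j}) = 1"
    using ms by (auto simp: ms_cherry_def)
  have "delta {i,j} \<in># mu_net n (V,A)" using c by (simp add: count_greater_zero_iff[symmetric])
  then obtain u where u: "u \<in> V_T (V,A)" "mu_vec n (V,A) u = delta {i,j}" using mem_mu_net_iff
    by metis
  have o: "children A u = {Leaf i, Leaf j}" using mu_delta_pair_imp_cherry_parent[OF u ij] by simp
  have x: "i \<in> X" "j \<in> X" using Leaf_child_label o by auto
  have "u \<in> parents A (Leaf i)" "u \<in> parents A (Leaf j)" using o
    by (auto simp: children_def parents_def)
  hence "par A (Leaf i) = u" "par A (Leaf j) = u" using parents_Leaf x by auto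
  moreover have "is_leaf_node (V,A) (Leaf i)" "is_leaf_node (V,A) (Leaf j)"
    using x leaf_node_iff_Leaf by auto
  ultimately show ?thesis using ij by (simp add: net_cherry_def)
qed

text \<open>In the mirrored configuration, the second parent of the reticulation is reached from the
  root child, so the root child lies on strictly more paths to \<open>j\<close> than to \<open>i\<close>: the
  reticulated-cherry condition on \<open>\<mu>(N)\<close> fails there.\<close>

lemma root_child_refutes_mirrored_ret_cherry:
  assumes x: "i \<in> X" "j \<in> X" "i \<noteq> j" and rh: "is_ret_node (V,A) h"
    and ou: "children A u = {h, Leaf i}" and oh: "children A h = {Leaf j}"
  shows "root_child \<in> V_T (V,A)" "mu_vec n (V,A) root_child \<noteq> delta {i}"
    "mu_vec n (V,A) root_child \<noteq> delta {j}"
      "mu_vec n (V,A) root_child i < mu_vec n (V,A) root_child j"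
proof -
  let ?m = "mu_vec n (V,A)" and ?c = root_child
  have "u \<in> parents A (Leaf i)" "h \<in> parents A (Leaf j)" "u \<in> parents A h"
    using ou oh by (auto simp: children_def parents_def)
  hence iLi: "parents A (Leaf i) = {u}" and iLj: "parents A (Leaf j) = {h}" using parents_Leaf x
    by auto
  obtain q where q: "parents A h = {u,q}" "u \<noteq> q"
    using rh \<open>u \<in> parents A h\<close> unfolding ret_node_iff
      by (metis insert_commute insert_iff singletonD)
  have q_root: "q \<noteq> the_root"
  proof
    assume "q = the_root"
    hence "h \<in> children A the_root" using q by (auto simp: children_def parents_def)
    hence "h = root_child" using children_the_root by simp
    thus False using rh root_child_not_ret by simp
  qed
  have cq: "(?c, q) \<in> (set_mset A)\<^sup>*"
    using root_child_reaches[OF _ q_root] q parent_mem_nodes by auto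
  have npq: "npaths A ?c q \<ge> 1" by (rule rtrancl_imp_npaths_pos[OF acyclic_arcs cq])
  have "(?c, h) \<in> (set_mset A)\<^sup>+" using cq q by (auto simp: parents_def)
  then obtain y where "(?c, y) \<in> set_mset A" using tranclD by metis
  hence cnl: "\<not> is_leaf_node (V,A) ?c" using children_leaf by (auto simp: children_def)
  hence ct: "is_tree_node (V,A) ?c"
    using node_kinds[OF root_child_mem_nodes] root_child_not_ret root_child_not_root by blast
  thus "?c \<in> V_T (V,A)" by (rule tree_mem_V_T)
  have cLi: "?c \<noteq> Leaf i" "?c \<noteq> Leaf j" "?c \<noteq> h"
    using cnl rh root_child_not_ret x leaf_node_iff_Leaf by auto
  have mi: "?m ?c i = npaths A ?c u"
    using npaths_step_parents[of ?c "Leaf i"] iLi cLi mu_vec_label[of i ?c] x label_nonzero by simp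
  have mj: "?m ?c j = npaths A ?c u + npaths A ?c q"
    using npaths_step_parents[of ?c "Leaf j"] npaths_step_parents[of ?c h] iLj q cLi
      mu_vec_label[of j ?c] x label_nonzero by simp
  show "?m ?c i < ?m ?c j" using mi mj npq by simp
  show "?m ?c \<noteq> delta {i}"
  proof
    assume "?m ?c = delta {i}"
    hence "?m ?c j = 0" using x by (simp add: delta_def)
    thus False using mj npq by simp
  qed
  have "?m ?c 0 \<ge> 1"
    using npaths_ret_le_mu_0[OF ret_mem_V_H[OF rh], of ?c] npaths_step_parents[of ?c h] q cLi npq
      by simp
  thus "?m ?c \<noteq> delta {j}" using label_nonzero[OF x(2)] by (auto simp: delta_def)
qed

lemma ms_ret_cherry_imp_net_ret_cherry:
  assumes ms: "ms_ret_cherry n (mu_net n (V,A)) (i,j)"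
  shows "net_ret_cherry (V,A) (i,j)"
proof -
  have ij: "i \<noteq> j" "i \<in> {1..n}" "j \<in> {1..n}" and c: "count (mu_net n (V,A)) (delta {0,i,j}) = 1"
    and cond: "\<forall>\<mu>\<in>#mu_net n (V,A). \<mu> \<noteq> delta {i} \<and> \<mu> \<noteq> delta {j} \<longrightarrow> \<mu> i \<le> \<mu> 0 \<and> \<mu> j \<le> \<mu> i"
    using ms by (auto simp: ms_ret_cherry_def)
  have "delta {0,i,j} \<in># mu_net n (V,A)" using c by (simp add: count_greater_zero_iff[symmetric])
  then obtain u where u: "u \<in> V_T (V,A)" "mu_vec n (V,A) u = delta {0,i,j}" using mem_mu_net_iff
    by metis
  obtain h where t: "is_tree_node (V,A) u" and rh: "is_ret_node (V,A) h"
    and cases: "(children A u = {h, Leaf j} \<and> children A h = {Leaf i}) \<or>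
                (children A u = {h, Leaf i} \<and> children A h = {Leaf j})"
    using mu_delta_triple_imp_ret_cherry_grandparent[OF u ij] by blast
  show ?thesis using cases
  proof
    assume o: "children A u = {h, Leaf j} \<and> children A h = {Leaf i}"
    have x: "i \<in> X" "j \<in> X" using Leaf_child_label o by auto
    have "h \<in> parents A (Leaf i)" "u \<in> parents A (Leaf j)" "u \<in> parents A h" using o
      by (auto simp: children_def parents_def)
    hence "par A (Leaf i) = h" "par A (Leaf j) = u"
      using parents_Leaf[OF x(1)] parents_Leaf[OF x(2)] by auto
    moreover have "(u,h) \<in># A" using o by (auto simp: children_def)
    moreover have "is_leaf_node (V,A) (Leaf i)" "is_leaf_node (V,A) (Leaf j)"
      using x leaf_node_iff_Leaf by auto
    ultimately show ?thesis using ij rh t by (simp add: net_ret_cherry_def)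
  next
    assume o: "children A u = {h, Leaf i} \<and> children A h = {Leaf j}"
    have x: "i \<in> X" "j \<in> X" using Leaf_child_label o by auto
    note c = root_child_refutes_mirrored_ret_cherry[OF x ij(1) rh conjunct1[OF o] conjunct2[OF o]]
    have "mu_vec n (V,A) root_child \<in># mu_net n (V,A)" using mem_mu_net_iff c(1) by blast
    hence "mu_vec n (V,A) root_child j \<le> mu_vec n (V,A) root_child i" using cond c(2,3) by blast
    thus ?thesis using c(4) by simp
  qed
qed

lemma net_cherry_imp_ms_cherry:
  assumes nc: "net_cherry (V,A) (i,j)" and ij: "i \<in> {1..n}" "j \<in> {1..n}"
  shows "ms_cherry n (mu_net n (V,A)) (i,j)"
proof -
  let ?m = "mu_vec n (V,A)"
  define p where "p = par A (Leaf i)"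
  have x: "i \<in> X" "j \<in> X" "i \<noteq> j" and iLi: "parents A (Leaf i) = {p}"
    and iLj: "parents A (Leaf j) = {p}"
    and tp: "is_tree_node (V,A) p"
    using net_cherry_structure[OF nc] p_def by auto
  have mp: "?m p = delta {i,j}" using mu_vec_cherry_parent[OF nc] p_def by simp
  have setp: "{u\<in>V_T (V,A). ?m u = delta {i,j}} = {p}"
  proof (intro equalityI subsetI)
    fix u assume "u \<in> {u\<in>V_T (V,A). ?m u = delta {i,j}}"
    hence u: "u \<in> V_T (V,A)" "?m u = delta {i,j}" by auto
    hence "children A u = {Leaf i, Leaf j}" using mu_delta_pair_imp_cherry_parent[OF u x(3) ij]
      by simp
    hence "u \<in> parents A (Leaf i)" by (auto simp: children_def parents_def)
    thus "u \<in> {p}" using iLi by simp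
  next
    fix u assume "u \<in> {p}" thus "u \<in> {u\<in>V_T (V,A). ?m u = delta {i,j}}"
      using tree_mem_V_T[OF tp] mp by simp
  qed
  have cnt: "count (mu_net n (V,A)) (delta {i,j}) = 1" using count_mu_net setp by simp
  have cond: "\<forall>\<mu>\<in>#mu_net n (V,A). \<mu> \<noteq> delta {i} \<and> \<mu> \<noteq> delta {j} \<longrightarrow> \<mu> i = \<mu> j"
  proof (intro ballI impI)
    fix \<mu> assume mu: "\<mu> \<in># mu_net n (V,A)" and ne: "\<mu> \<noteq> delta {i} \<and> \<mu> \<noteq> delta {j}"
    then obtain u where u: "u \<in> V_T (V,A)" "\<mu> = ?m u" using mem_mu_net_iff by blast
    have ui: "u \<noteq> Leaf i" using ne u mu_vec_Leaf[OF x(1)] by auto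
    have uj: "u \<noteq> Leaf j" using ne u mu_vec_Leaf[OF x(2)] by auto
    have "?m u i = npaths A u (Leaf i)" using mu_vec_label[of i u] x ij by simp
    also have "\<dots> = npaths A u p" using npaths_step_parents[of u "Leaf i"] iLi ui by simp
    also have "\<dots> = npaths A u (Leaf j)" using npaths_step_parents[of u "Leaf j"] iLj uj by simp
    also have "\<dots> = ?m u j" using mu_vec_label[of j u] x ij by simp
    finally show "\<mu> i = \<mu> j" using u by simp
  qed
  show ?thesis using x ij cnt cond by (simp add: ms_cherry_def)
qed

lemma net_ret_cherry_imp_ms_ret_cherry:
  assumes nc: "net_ret_cherry (V,A) (i,j)" and ij: "i \<in> {1..n}" "j \<in> {1..n}"
  shows "ms_ret_cherry n (mu_net n (V,A)) (i,j)"
proof -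
  let ?m = "mu_vec n (V,A)"
  define h where "h = par A (Leaf i)"
  define g where "g = par A (Leaf j)"
  have x: "i \<in> X" "j \<in> X" "i \<noteq> j" and iLi: "parents A (Leaf i) = {h}"
    and iLj: "parents A (Leaf j) = {g}"
    and rh: "is_ret_node (V,A) h" and tg: "is_tree_node (V,A) g" and gh: "(g,h) \<in># A"
    using net_ret_cherry_structure[OF nc] h_def g_def by auto
  have mg: "?m g = delta {0,i,j}" using mu_vec_ret_cherry_grandparent[OF nc] g_def by simp
  have setg: "{u\<in>V_T (V,A). ?m u = delta {0,i,j}} = {g}"
  proof (intro equalityI subsetI)
    fix u assume "u \<in> {u\<in>V_T (V,A). ?m u = delta {0,i,j}}"
    hence u: "u \<in> V_T (V,A)" "?m u = delta {0,i,j}" by auto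
    obtain h' where rh': "is_ret_node (V,A) h'"
      and cs: "(children A u = {h', Leaf j} \<and> children A h' = {Leaf i}) \<or>
               (children A u = {h', Leaf i} \<and> children A h' = {Leaf j})"
      using mu_delta_triple_imp_ret_cherry_grandparent[OF u x(3) ij] by blast
    show "u \<in> {g}" using cs
    proof
      assume "children A u = {h', Leaf j} \<and> children A h' = {Leaf i}"
      hence "u \<in> parents A (Leaf j)" by (auto simp: children_def parents_def)
      thus ?thesis using iLj by simp
    next
      assume "children A u = {h', Leaf i} \<and> children A h' = {Leaf j}"
      hence "h' \<in> parents A (Leaf j)" by (auto simp: children_def parents_def)
      hence "h' = g" using iLj by simp
      hence False using rh' tg ret_not_tree by blast
      thus ?thesis by simp
    qed
  next
    fix u assume "u \<in> {g}" thus "u \<in> {u\<in>V_T (V,A). ?m u = delta {0,i,j}}"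
      using tree_mem_V_T[OF tg] mg by simp
  qed
  have cnt: "count (mu_net n (V,A)) (delta {0,i,j}) = 1" using count_mu_net setg by simp
  have cond: "\<forall>\<mu>\<in>#mu_net n (V,A). \<mu> \<noteq> delta {i} \<and> \<mu> \<noteq> delta {j} \<longrightarrow> \<mu> i \<le> \<mu> 0 \<and> \<mu> j \<le> \<mu> i"
  proof (intro ballI impI)
    fix \<mu> assume mu: "\<mu> \<in># mu_net n (V,A)" and ne: "\<mu> \<noteq> delta {i} \<and> \<mu> \<noteq> delta {j}"
    then obtain u where u: "u \<in> V_T (V,A)" "\<mu> = ?m u" using mem_mu_net_iff by blast
    have ui: "u \<noteq> Leaf i" using ne u mu_vec_Leaf[OF x(1)] by auto
    have uj: "u \<noteq> Leaf j" using ne u mu_vec_Leaf[OF x(2)] by auto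
    have a: "?m u i = npaths A u h"
      using mu_vec_label[of i u] x ij npaths_step_parents[of u "Leaf i"] iLi ui by simp
    have b: "?m u j = npaths A u g"
      using mu_vec_label[of j u] x ij npaths_step_parents[of u "Leaf j"] iLj uj by simp
    have c: "npaths A u h \<le> ?m u 0" by (rule npaths_ret_le_mu_0[OF ret_mem_V_H[OF rh]])
    have d: "npaths A u g \<le> npaths A u h"
      by (rule npaths_parent_le) (use gh in \<open>simp add: parents_def\<close>)
    show "\<mu> i \<le> \<mu> 0 \<and> \<mu> j \<le> \<mu> i" using a b c d u by simp
  qed
  show ?thesis using x ij cnt cond by (simp add: ms_ret_cherry_def)
qed

lemma net_reducible_iff_ms_reducible:
  assumes ij: "i \<in> {1..n}" "j \<in> {1..n}"
  shows "net_reducible (V,A) (i,j) \<longleftrightarrow> ms_reducible n (mu_net n (V,A)) (i,j)"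
  using net_cherry_imp_ms_cherry[OF _ ij] net_ret_cherry_imp_ms_ret_cherry[OF _ ij]
    ms_cherry_imp_net_cherry ms_ret_cherry_imp_net_ret_cherry
  by (auto simp: net_reducible_def ms_reducible_def)

end

section \<open>Network reductions as rewirings\<close>

text \<open>Both network reductions delete a set \<open>W\<close> of nodes together with all arcs touching it and
  add a set \<open>E\<close> of new arcs, each of which shortcuts a path through \<open>W\<close>.\<close>

definition touches :: "'a set \<Rightarrow> 'a \<times> 'a \<Rightarrow> bool" where
  "touches W e \<longleftrightarrow> fst e \<in> W \<or> snd e \<in> W"

definition rewire :: "('a \<times> 'a) multiset \<Rightarrow> 'a set \<Rightarrow> ('a \<times> 'a) set \<Rightarrow> ('a \<times> 'a) multiset" where
  "rewire A W E = filter_mset (\<lambda>e. \<not> touches W e) A + mset_set E"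

lemma count_rewire:
  "finite E \<Longrightarrow> count (rewire A W E) e = (if touches W e then 0 else count A e) + (if e \<in> E then 1 else 0)"
  by (simp add: rewire_def)

lemma mem_rewire: "finite E \<Longrightarrow> e \<in># rewire A W E \<longleftrightarrow> (e \<in># A \<and> \<not> touches W e) \<or> e \<in> E"
  by (auto simp: rewire_def)

lemma parents_rewire:
  "finite E \<Longrightarrow> v \<notin> W \<Longrightarrow> parents (rewire A W E) v = {w \<in> parents A v. w \<notin> W} \<union> {w. (w,v) \<in> E}"
  by (auto simp: rewire_def parents_def touches_def)

lemma children_rewire:
  "finite E \<Longrightarrow> v \<notin> W \<Longrightarrow> children (rewire A W E) v = {c \<in> children A v. c \<notin> W} \<union> {c. (v,c) \<in> E}"
  by (auto simp: rewire_def children_def touches_def)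

lemma acyclic_subset_trancl: "acyclic R \<Longrightarrow> E \<subseteq> R\<^sup>+ \<Longrightarrow> S \<subseteq> R \<union> E \<Longrightarrow> acyclic S"
proof -
  assume "acyclic R" "E \<subseteq> R\<^sup>+" "S \<subseteq> R \<union> E"
  hence "S\<^sup>+ \<subseteq> (R\<^sup>+)\<^sup>+" by (intro trancl_mono_subset) auto
  thus ?thesis using \<open>acyclic R\<close> by (auto simp: acyclic_def)
qed

lemma card_Diff_Un_swap:
  assumes "finite S" "T \<subseteq> S" "U \<inter> S = {}" "card T = card U" "finite U"
  shows "card ((S - T) \<union> U) = card S"
proof -
  have "card ((S - T) \<union> U) = card (S - T) + card U"
    by (rule card_Un_disjoint) (use assms in auto)
  also have "card (S - T) = card S - card T"
    by (rule card_Diff_subset) (use assms finite_subset in auto)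
  also have "card T \<le> card S" by (rule card_mono) (use assms in auto)
  ultimately show ?thesis using assms(4) by simp
qed

context network begin

lemma arcs_split:
  assumes "finite D" "\<forall>e\<in>D. e \<in># A" "\<forall>e. e \<in># A \<longrightarrow> touches W e \<longrightarrow> e \<in> D" "\<forall>e\<in>D. touches W e"
  shows "A = filter_mset (\<lambda>e. \<not> touches W e) A + mset_set D"
proof (rule multiset_eqI)
  fix e
  have "count A e = 1" if "e \<in> D"
  proof -
    have "0 < count A e" using assms(2) that by simp
    moreover have "count A e \<le> 1" using no_parallel_arcs by blast
    ultimately show ?thesis by linarith
  qed
  moreover have "count A e = 0" if "touches W e" "e \<notin> D" using assms(3) that not_in_iff[of e A]
    by blast
  ultimately show "count A e = count (filter_mset (\<lambda>e. \<not> touches W e) A + mset_set D) e"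
    using assms(1,4) by (cases "e \<in> D") (auto simp: count_mset_set)
qed

lemma rewire_no_parallel_arcs:
  assumes "finite E" "\<forall>e\<in>E. e \<notin># A" shows "\<forall>e. count (rewire A W E) e \<le> 1"
  using assms no_parallel_arcs by (simp add: count_rewire not_in_iff)

lemma node_kinds_rewire:
  assumes Efin: "finite E" and fresh: "\<forall>e\<in>E. e \<notin># A"
    and degrees: "\<forall>v\<in>V - W. card (parents (rewire A W E) v) = card (parents A v) \<and>
                            card (children (rewire A W E) v) = card (children A v)"
    and v: "v \<in> V - W"
  shows "is_root_node (V - W, rewire A W E) v = is_root_node (V,A) v"
    and "is_leaf_node (V - W, rewire A W E) v = is_leaf_node (V,A) v"
    and "is_tree_node (V - W, rewire A W E) v = is_tree_node (V,A) v"
    and "is_ret_node (V - W, rewire A W E) v = is_ret_node (V,A) v"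
proof -
  note simple = rewire_no_parallel_arcs[OF Efin fresh]
  have "indeg (rewire A W E) v = indeg A v" "outdeg (rewire A W E) v = outdeg A v"
    using degrees v indeg_eq_card_parents[OF simple] outdeg_eq_card_children[OF simple]
      indeg_eq_card outdeg_eq_card by simp_all
  thus "is_root_node (V - W, rewire A W E) v = is_root_node (V,A) v"
    "is_leaf_node (V - W, rewire A W E) v = is_leaf_node (V,A) v"
    "is_tree_node (V - W, rewire A W E) v = is_tree_node (V,A) v"
    "is_ret_node (V - W, rewire A W E) v = is_ret_node (V,A) v"
    using v by (simp_all add: is_root_node_def is_leaf_node_def is_tree_node_def is_ret_node_def)
qed

theorem network_rewire:
  assumes W: "W \<subseteq> V" and Efin: "finite E" and E_nodes: "\<forall>e\<in>E. fst e \<in> V - W \<and> snd e \<in> V - W"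
    and fresh: "\<forall>e\<in>E. e \<notin># A" and shortcut: "E \<subseteq> (set_mset A)\<^sup>+"
    and degrees: "\<forall>v\<in>V - W. card (parents (rewire A W E) v) = card (parents A v) \<and>
                            card (children (rewire A W E) v) = card (children A v)"
    and root_notin: "the_root \<notin> W"
  shows "is_network n {k\<in>X. Leaf k \<notin> W} (V - W, rewire A W E)"
proof -
  let ?A = "rewire A W E" and ?V = "V - W" and ?X = "{k\<in>X. Leaf k \<notin> W}"
  note kinds = node_kinds_rewire[OF Efin fresh degrees]
  have arcs: "\<forall>(u,v)\<in>#?A. u \<in> ?V \<and> v \<in> ?V"
    using mem_rewire[OF Efin] arc_nodes E_nodes by (fastforce simp: touches_def)
  have acyc: "acyclic (set_mset ?A)"
    by (rule acyclic_subset_trancl[OF acyclic_arcs shortcut]) (use mem_rewire[OF Efin] in blast)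
  have indeg_0: "indeg ?A v = 0 \<longleftrightarrow> parents A v = {}" if "v \<in> ?V" for v
    using degrees that indeg_eq_card_parents[OF rewire_no_parallel_arcs[OF Efin fresh]]
      finite_parents[of A v] by simp
  have root: "\<exists>!r. r \<in> ?V \<and> indeg ?A r = 0"
  proof (rule ex1I[of _ the_root])
    show "the_root \<in> ?V \<and> indeg ?A the_root = 0"
      using the_root_mem_nodes root_notin parents_the_root indeg_0 by simp
  qed (use indeg_0 the_root_unique in blast)
  have types: "\<forall>v\<in>?V. is_root_node (?V,?A) v \<or> is_leaf_node (?V,?A) v \<or> is_tree_node (?V,?A) v \<or>
                       is_ret_node (?V,?A) v"
    using node_kinds kinds by simp
  have typq: "is_leaf_node (?V,?A) v = is_leaf_node (V,A) v" if "v \<in> ?V" for v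
    using kinds(2)[OF that] .
  have leaves': "{v \<in> ?V. is_leaf_node (?V,?A) v} = Leaf ` ?X"
  proof (intro equalityI subsetI)
    fix v assume "v \<in> {v \<in> ?V. is_leaf_node (?V,?A) v}"
    hence v: "v \<in> ?V" "is_leaf_node (V,A) v" using typq by auto
    then obtain k where k: "k \<in> X" "v = Leaf k" using leaf_node_iff_Leaf by blast
    show "v \<in> Leaf ` ?X" using k v(1) by auto
  next
    fix v :: "'v pnode" assume "v \<in> Leaf ` ?X"
    then obtain k where k: "k \<in> X" "Leaf k \<notin> W" "v = Leaf k" by blast
    have l: "is_leaf_node (V,A) v" using k leaf_node_iff_Leaf by blast
    have vV: "v \<in> ?V" using l k by (simp add: is_leaf_node_def)
    show "v \<in> {v \<in> ?V. is_leaf_node (?V,?A) v}" using vV l typq[OF vV] by simp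
  qed
  have lv: "?V \<inter> range Leaf = Leaf ` ?X" using Leaf_mem_nodes_iff by auto
  show ?thesis unfolding is_network_def Let_def fst_conv snd_conv
    using finite_nodes labels_subset arcs rewire_no_parallel_arcs[OF Efin fresh] acyc root types leaves' lv
    by auto
qed

end

locale cherry_reduction = network +
  fixes i j :: nat
  assumes nc: "net_cherry (V,A) (i,j)" and ij: "i \<in> {1..n}" "j \<in> {1..n}"
begin

definition "p = par A (Leaf i)"
definition "g = par A p"
definition "W = {p, Leaf i}"
definition "E = {(g, Leaf j)}"
definition "B = filter_mset (\<lambda>e. \<not> touches W e) A"

lemma config: "i \<in> X" "j \<in> X" "i \<noteq> j" "parents A (Leaf i) = {p}" "parents A (Leaf j) = {p}"
  "is_tree_node (V,A) p"
   "children A p = {Leaf i, Leaf j}"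
  using net_cherry_structure[OF nc] p_def by auto

lemma parents_p: "parents A p = {g}"
proof -
  obtain q where "parents A p = {q}" using config(6) unfolding tree_node_iff by blast
  thus ?thesis by (simp add: g_def par_eq)
qed

lemma arc_g_p: "(g,p) \<in># A" using parents_p by (auto simp: parents_def)
lemma arc_p_i: "(p, Leaf i) \<in># A" using config(4) by (auto simp: parents_def)
lemma p_mem_nodes: "p \<in> V" using arc_p_i arc_nodes by blast
lemma arc_p_j: "(p, Leaf j) \<in># A" using config(5) by (auto simp: parents_def)
lemma g_mem_nodes: "g \<in> V" using arc_g_p arc_nodes by blast
lemma Leaf_i_mem_nodes: "Leaf i \<in> V" using arc_p_i arc_nodes by blast
lemma Leaf_j_mem_nodes: "Leaf j \<in> V" using arc_p_j arc_nodes by blast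
lemma g_neq_p: "g \<noteq> p" using arc_g_p acyclic_arc_rtrancl_contr[OF acyclic_arcs, of g p] by auto
lemma leaf_Leaf_i: "is_leaf_node (V,A) (Leaf i)" using config(1) leaf_node_iff_Leaf by blast
lemma leaf_Leaf_j: "is_leaf_node (V,A) (Leaf j)" using config(2) leaf_node_iff_Leaf by blast
lemma children_Leaf_i: "children A (Leaf i) = {}" using children_leaf leaf_Leaf_i by blast
lemma children_Leaf_j: "children A (Leaf j) = {}" using children_leaf leaf_Leaf_j by blast
lemma g_neq_Leaf: "g \<noteq> Leaf i" "g \<noteq> Leaf j"
  using arc_g_p children_Leaf_i children_Leaf_j by (auto simp: children_def)
lemma p_neq_Leaf: "p \<noteq> Leaf i" "p \<noteq> Leaf j" using config(6) tree_not_leaf leaf_Leaf_i leaf_Leaf_j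
  by auto
lemma Leaf_i_neq_Leaf_j: "Leaf i \<noteq> Leaf j" using config(3) by simp
lemma p_not_Leaf: "p \<noteq> Leaf x"
proof
  assume "p = Leaf x"
  hence "x \<in> X" using p_mem_nodes Leaf_mem_nodes_iff by simp
  hence "is_leaf_node (V,A) p" using \<open>p = Leaf x\<close> leaf_node_iff_Leaf by blast
  thus False using config(6) tree_not_leaf by blast
qed
lemma Leaf_neq_p: "Leaf x \<noteq> p" using p_not_Leaf by metis

lemma touching_arcs: "e \<in># A \<Longrightarrow> touches W e \<Longrightarrow> e \<in> {(p, Leaf i), (g,p), (p, Leaf j)}"
proof -
  assume e: "e \<in># A" "touches W e"
  obtain x y where xy: "e = (x,y)" by (cases e)
  have "x \<in> W \<or> y \<in> W" using e xy by (simp add: touches_def)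
  moreover have "x = p \<Longrightarrow> y \<in> {Leaf i, Leaf j}" using e xy config(7) by (auto simp: children_def)
  moreover have "x \<noteq> Leaf i" using e xy children_Leaf_i by (auto simp: children_def)
  moreover have "y = p \<Longrightarrow> x = g" using e xy parents_p by (auto simp: parents_def)
  moreover have "y = Leaf i \<Longrightarrow> x = p" using e xy config(4) by (auto simp: parents_def)
  ultimately show ?thesis using xy by (auto simp: W_def)
qed

lemma arcs_eq: "A = B + {#(p, Leaf i), (g,p), (p, Leaf j)#}"
proof -
  have "A = B + mset_set {(p, Leaf i), (g,p), (p, Leaf j)}"
    unfolding B_def
    by (rule arcs_split) (use touching_arcs arc_g_p arc_p_i arc_p_j in \<open>auto simp: touches_def W_def\<close>)
  moreover have "mset_set {(p, Leaf i), (g,p), (p, Leaf j)} = {#(p, Leaf i), (g,p), (p, Leaf j)#}"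
    using g_neq_p Leaf_i_neq_Leaf_j by simp
  ultimately show ?thesis by simp
qed

lemma mem_B: "(x,y) \<in># B \<Longrightarrow> (x,y) \<in># A \<and> x \<notin> W \<and> y \<notin> W"
  by (simp add: B_def touches_def)
lemma B_submset: "B \<subseteq># A" by (simp add: B_def)

lemma parents_B_W: "v \<in> W \<Longrightarrow> parents B v = {}" using mem_B by (auto simp: parents_def)
lemma children_B_W: "v \<in> W \<Longrightarrow> children B v = {}" using mem_B by (auto simp: children_def)

lemma net_red_eq: "net_red (V,A) (i,j) = (V - W, B + {#(g, Leaf j)#})"
proof -
  have A1: "A - {#(p, Leaf i)#} = B + {#(g,p), (p, Leaf j)#}" by (subst arcs_eq) simp
  have i1: "parents (B + {#(g,p), (p, Leaf j)#}) p = {g}"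
    using parents_B_W[of p] p_neq_Leaf by (auto simp: parents_def W_def)
  have o1: "children (B + {#(g,p), (p, Leaf j)#}) p = {Leaf j}"
    using children_B_W[of p] g_neq_p by (auto simp: children_def W_def)
  have "net_red (V,A) (i,j) = suppress (V - {Leaf i}, B + {#(g,p), (p, Leaf j)#}) p"
    using nc A1 by (simp add: net_red_def p_def[symmetric] Let_def)
  also have "\<dots> = (V - {Leaf i} - {p}, B + {#(g,p), (p, Leaf j)#} - {#(g,p), (p, Leaf j)#} + {#(g, Leaf j)#})"
    using par_eq[OF i1] chld_eq[OF o1] by (simp add: suppress_def Let_def)
  also have "\<dots> = (V - W, B + {#(g, Leaf j)#})" by (auto simp: W_def)
  finally show ?thesis .
qed

lemma rewire_eq: "rewire A W E = B + {#(g, Leaf j)#}" by (simp add: rewire_def E_def B_def)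

lemma new_arcs_fresh: "\<forall>e\<in>E. e \<notin># A"
proof -
  have "(g, Leaf j) \<notin># A"
  proof
    assume "(g, Leaf j) \<in># A" hence "g \<in> parents A (Leaf j)" by (simp add: parents_def)
    thus False using config(5) g_neq_p by simp
  qed
  thus ?thesis by (simp add: E_def)
qed

lemma degrees_preserved:
  "\<forall>v\<in>V - W. card (parents (rewire A W E) v) = card (parents A v) \<and>
               card (children (rewire A W E) v) = card (children A v)"
proof
  fix v assume v: "v \<in> V - W"
  have vW: "v \<notin> W" using v by simp
  have finite_E: "finite E" by (simp add: E_def)
  have ins_eq: "card (parents (rewire A W E) v) = card (parents A v)"
  proof (cases "v = Leaf j")
    case True
    have "parents (rewire A W E) v = {g}" using parents_rewire[OF finite_E vW] True config(5)
      by (auto simp: E_def W_def)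
    thus ?thesis using True config(5) by simp
  next
    case False
    have "w \<notin> W" if "w \<in> parents A v" for w
    proof
      assume "w \<in> W"
      hence "w = p \<or> w = Leaf i" by (simp add: W_def)
      thus False using that config(7) children_Leaf_i False vW child_iff_parent[where A=A]
        by (auto simp: W_def)
    qed
    hence "parents (rewire A W E) v = parents A v" using parents_rewire[OF finite_E vW] False
      by (auto simp: E_def)
    thus ?thesis by simp
  qed
  have outs_eq: "card (children (rewire A W E) v) = card (children A v)"
  proof (cases "v = g")
    case True
    have pin: "p \<in> children A g" using parents_p child_iff_parent[where A=A] by simp
    have Lin: "Leaf i \<notin> children A g" using config(4) g_neq_p child_iff_parent[where A=A] by auto
    have Ljn: "Leaf j \<notin> children A g" using config(5) g_neq_p child_iff_parent[where A=A] by auto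
    have "children (rewire A W E) v = (children A g - {p}) \<union> {Leaf j}"
      using children_rewire[OF finite_E vW] True Lin by (auto simp: E_def W_def)
    moreover have "card ((children A g - {p}) \<union> {Leaf j}) = card (children A g)"
    proof -
      have "card (children A g) > 0" using pin finite_children[of A g] card_gt_0_iff by blast
      thus ?thesis using Ljn pin finite_children[of A g]
        by (simp add: card_insert_if card_Diff_singleton)
    qed
    ultimately show ?thesis using True by simp
  next
    case False
    have "c \<notin> W" if "c \<in> children A v" for c
    proof
      assume "c \<in> W"
      hence "c = p \<or> c = Leaf i" by (simp add: W_def)
      thus False using that parents_p config(4) False vW child_iff_parent[where A=A]
        by (auto simp: W_def)
    qed
    hence "children (rewire A W E) v = children A v" using children_rewire[OF finite_E vW] False
      by (auto simp: E_def)
    thus ?thesis by simp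
  qed
  show "card (parents (rewire A W E) v) = card (parents A v) \<and>
        card (children (rewire A W E) v) = card (children A v)"
    using ins_eq outs_eq by simp
qed

lemma the_root_notin_W: "the_root \<notin> W"
proof
  assume "the_root \<in> W"
  hence "parents A the_root \<noteq> {}" using parents_p config(4) by (auto simp: W_def)
  thus False using parents_the_root by simp
qed

lemma new_arcs_trancl: "E \<subseteq> (set_mset A)\<^sup>+"
  using arc_g_p arc_p_j by (auto simp: E_def)

lemma new_arcs_nodes: "\<forall>e\<in>E. fst e \<in> V - W \<and> snd e \<in> V - W"
  using g_mem_nodes Leaf_j_mem_nodes g_neq_p g_neq_Leaf p_neq_Leaf Leaf_i_neq_Leaf_j
    by (auto simp: E_def W_def)

lemma W_subset: "W \<subseteq> V" using p_mem_nodes Leaf_i_mem_nodes by (simp add: W_def)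

lemma labels_eq: "{k\<in>X. Leaf k \<notin> W} = X - {i}"
  using p_not_Leaf Leaf_neq_p by (auto simp: W_def)

lemma reduced_network: "is_network n (X - {i}) (V - W, B + {#(g, Leaf j)#})"
  using network_rewire[OF W_subset _ new_arcs_nodes new_arcs_fresh new_arcs_trancl degrees_preserved
      the_root_notin_W] labels_eq rewire_eq by (simp add: E_def)

abbreviation "A' \<equiv> B + {#(g, Leaf j)#}"

lemma reduced_network_locale: "network n (X - {i}) (V - W) A'" using reduced_network
  by (simp add: network_def)

lemma acyclic_A': "acyclic (set_mset A')" using network.acyclic_arcs[OF reduced_network_locale] .
lemma acyclic_B: "acyclic (set_mset B)" using acyclic_submset[OF acyclic_arcs B_submset] .

lemma npaths_B_to_W: "v \<in> W \<Longrightarrow> npaths B u v = (if u = v then 1 else 0)"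
  using npaths_to_parentless[OF acyclic_B parents_B_W] by simp
lemma npaths_B_from_W: "v \<in> W \<Longrightarrow> npaths B v x = (if v = x then 1 else 0)"
  using npaths_from_childless[OF acyclic_B children_B_W] by simp
lemma npaths_B_from_Leaf_j: "npaths B (Leaf j) x = (if Leaf j = x then 1 else 0)"
proof -
  have "children B (Leaf j) = {}" using children_Leaf_j B_submset
    by (auto simp: children_def dest: mset_subset_eqD)
  thus ?thesis using npaths_from_childless[OF acyclic_B] by simp
qed

lemma npaths_reduced:
  assumes u: "u \<notin> W" and x: "x \<notin> W"
  shows "npaths A' u x = npaths A u x"
proof -
  define B1 where "B1 = B + {#(p, Leaf j)#}"
  define B2 where "B2 = B1 + {#(p, Leaf i)#}"
  have AB: "A = B2 + {#(g,p)#}" unfolding B2_def B1_def by (subst arcs_eq) simp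
  have acA: "acyclic (set_mset (B2 + {#(g,p)#}))" using acyclic_arcs AB by simp
  have acB2: "acyclic (set_mset (B1 + {#(p, Leaf i)#}))" using acyclic_add_mset_left[OF acA] B2_def by simp
  have acB1: "acyclic (set_mset (B + {#(p, Leaf j)#}))" using acyclic_add_mset_left[OF acB2] B1_def by simp
  have pW: "p \<in> W" "Leaf i \<in> W" by (simp_all add: W_def)
  have up: "u \<noteq> p" "x \<noteq> p" "x \<noteq> Leaf i" using u x by (auto simp: W_def)
  have P1: "npaths B1 y z = npaths B y z + npaths B y p * npaths B (Leaf j) z" for y z
    unfolding B1_def by (rule npaths_add_arc[OF acB1])
  have P2: "npaths B2 y z = npaths B1 y z + npaths B1 y p * npaths B1 (Leaf i) z" for y z
    unfolding B2_def by (rule npaths_add_arc[OF acB2])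
  have PA: "npaths A y z = npaths B2 y z + npaths B2 y g * npaths B2 p z" for y z
    using npaths_add_arc[OF acA] AB by simp
  have PA': "npaths A' y z = npaths B y z + npaths B y g * npaths B (Leaf j) z" for y z
    by (rule npaths_add_arc[OF acyclic_A'])
  have b1: "npaths B y p = (if y = p then 1 else 0)" for y using npaths_B_to_W[OF pW(1)] .
  have b2: "npaths B p z = (if p = z then 1 else 0)" for z using npaths_B_from_W[OF pW(1)] .
  have b3: "npaths B (Leaf i) z = (if Leaf i = z then 1 else 0)" for z
    using npaths_B_from_W[OF pW(2)] .
  have b4: "npaths B (Leaf j) z = (if Leaf j = z then 1 else 0)" for z using npaths_B_from_Leaf_j .
  have c1: "npaths B1 u x = npaths B u x" using P1[of u x] b1 up by simp
  have c2: "npaths B1 u p = 0" using P1[of u p] b1 up by simp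
  have c3: "npaths B2 u x = npaths B u x" using P2[of u x] c1 c2 by simp
  have c4: "npaths B2 u g = npaths B u g"
    using P2[of u g] P1[of u g] P1[of u p] b1 up by simp
  have c5: "npaths B1 p x = (if Leaf j = x then 1 else 0)" using P1[of p x] b1 b2 b4 up by simp
  have c6: "npaths B1 p p = 1" using P1[of p p] b1 b4 Leaf_neq_p by simp
  have c7: "npaths B1 (Leaf i) x = 0" using P1[of "Leaf i" x] b1 b3 up p_neq_Leaf by simp
  have c8: "npaths B2 p x = (if Leaf j = x then 1 else 0)" using P2[of p x] c5 c6 c7 by simp
  show ?thesis using PA[of u x] PA'[of u x] c3 c4 c8 b4 by simp
qed

lemma finite_E: "finite E" by (simp add: E_def)

lemma node_kinds_reduced: "v \<in> V - W \<Longrightarrow>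
    is_root_node (V-W,A') v = is_root_node (V,A) v \<and> is_leaf_node (V-W,A') v = is_leaf_node (V,A) v \<and>
    is_tree_node (V-W,A') v = is_tree_node (V,A) v \<and> is_ret_node (V-W,A') v = is_ret_node (V,A) v"
  using node_kinds_rewire[OF finite_E new_arcs_fresh degrees_preserved] rewire_eq by simp

lemma ret_notin_W: "is_ret_node (V,A) v \<Longrightarrow> v \<notin> W"
  using config(6) leaf_Leaf_i ret_not_tree ret_not_leaf by (auto simp: W_def)

lemma V_H_reduced: "V_H (V - W, A') = V_H (V,A)"
proof (intro equalityI subsetI)
  fix v assume "v \<in> V_H (V - W, A')"
  hence v: "v \<in> V - W" "is_ret_node (V-W,A') v" by (auto simp: V_H_def)
  thus "v \<in> V_H (V,A)" using node_kinds_reduced[OF v(1)] by (simp add: V_H_eq)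
next
  fix v assume "v \<in> V_H (V,A)"
  hence v: "v \<in> V" "is_ret_node (V,A) v" by (auto simp: V_H_eq)
  hence vW: "v \<in> V - W" using ret_notin_W by simp
  thus "v \<in> V_H (V - W, A')" using node_kinds_reduced[OF vW] v by (simp add: V_H_def)
qed

lemma V_T_reduced: "V_T (V - W, A') = V_T (V,A) - W"
proof (intro equalityI subsetI)
  fix v assume "v \<in> V_T (V - W, A')"
  hence v: "v \<in> V - W" "is_leaf_node (V-W,A') v \<or> is_tree_node (V-W,A') v" by (auto simp: V_T_def)
  thus "v \<in> V_T (V,A) - W" using node_kinds_reduced[OF v(1)] by (simp add: V_T_eq)
next
  fix v assume "v \<in> V_T (V,A) - W"
  hence v: "v \<in> V - W" "is_leaf_node (V,A) v \<or> is_tree_node (V,A) v" by (auto simp: V_T_eq)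
  thus "v \<in> V_T (V - W, A')" using node_kinds_reduced[OF v(1)] by (simp add: V_T_def)
qed

lemma mu_vec_reduced: "u \<in> V - W \<Longrightarrow> mu_vec n (V - W, A') u = (mu_vec n (V,A) u)(i := 0)"
proof (rule ext)
  fix k assume u: "u \<in> V - W"
  show "mu_vec n (V - W, A') u k = ((mu_vec n (V,A) u)(i := 0)) k"
  proof (cases "k = 0")
    case True
    have "(\<Sum>h\<in>V_H (V,A). npaths A' u h) = (\<Sum>h\<in>V_H (V,A). npaths A u h)"
    proof (rule sum.cong[OF refl])
      fix h assume "h \<in> V_H (V,A)"
      hence "h \<notin> W" using ret_notin_W by (simp add: V_H_eq)
      thus "npaths A' u h = npaths A u h" using npaths_reduced u by simp
    qed
    thus ?thesis using True ij unfolding mu_vec_def snd_conv V_H_reduced by simp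
  next
    case False
    show ?thesis
    proof (cases "k = i")
      case True thus ?thesis using False by (simp add: mu_vec_def W_def)
    next
      case ki: False
      have LW: "Leaf k \<notin> W" using ki Leaf_neq_p by (simp add: W_def)
      have "npaths A' u (Leaf k) = npaths A u (Leaf k)" using npaths_reduced u LW by simp
      thus ?thesis using False ki LW by (simp add: mu_vec_def)
    qed
  qed
qed

lemma mu_vec_p: "mu_vec n (V,A) p = delta {i,j}"
  unfolding p_def by (rule mu_vec_cherry_parent[OF nc])

lemma W_subset_V_T: "W \<subseteq> V_T (V,A)"
  using tree_mem_V_T[OF config(6)] Leaf_mem_V_T[OF config(1)] by (simp add: W_def)

lemma mu_net_reduced:
  "mu_net n (V - W, A') = image_mset (\<lambda>\<mu>. \<mu>(i := 0)) (mu_net n (V,A) - {#delta {i}, delta {i,j}#})"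
proof -
  let ?m = "mu_vec n (V,A)"
  have fin: "finite (V_T (V,A))" by (rule finite_V_T)
  have U: "V_T (V,A) = (V_T (V,A) - W) \<union> W" using W_subset_V_T by auto
  have fW: "finite W" by (simp add: W_def)
  have "mset_set ((V_T (V,A) - W) \<union> W) = mset_set (V_T (V,A) - W) + mset_set W"
    by (rule mset_set_Union) (use fin fW in auto)
  hence "mset_set (V_T (V,A)) = mset_set (V_T (V,A) - W) + mset_set W" using U by simp
  moreover have "mset_set W = {#p, Leaf i#}" using p_neq_Leaf by (simp add: W_def)
  ultimately have "mu_net n (V,A) = image_mset ?m (mset_set (V_T (V,A) - W)) + {#delta {i,j}, delta {i}#}"
    using mu_vec_p mu_vec_Leaf[OF config(1)] by (simp add: mu_net_def)
  hence "mu_net n (V,A) - {#delta {i}, delta {i,j}#} = image_mset ?m (mset_set (V_T (V,A) - W))"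
    by simp
  hence "image_mset (\<lambda>\<mu>. \<mu>(i := 0)) (mu_net n (V,A) - {#delta {i}, delta {i,j}#})
       = image_mset (\<lambda>u. (?m u)(i := 0)) (mset_set (V_T (V,A) - W))"
    by (simp add: image_mset.compositionality comp_def)
  also have "\<dots> = image_mset (mu_vec n (V - W, A')) (mset_set (V_T (V,A) - W))"
  proof (rule image_mset_cong)
    fix u assume "u \<in># mset_set (V_T (V,A) - W)"
    hence "u \<in> V - W" using fin by (auto simp: V_T_eq)
    thus "(?m u)(i := 0) = mu_vec n (V - W, A') u" using mu_vec_reduced by simp
  qed
  also have "\<dots> = mu_net n (V - W, A')" unfolding mu_net_def V_T_reduced ..
  finally show ?thesis by simp
qed

lemma cherry_reduction_correct: "is_network n (X - {i}) (net_red (V,A) (i,j)) \<and>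
   ms_red n (mu_net n (V,A)) (i,j) = Some (mu_net n (net_red (V,A) (i,j)))"
proof -
  have c: "ms_cherry n (mu_net n (V,A)) (i,j)" by (rule net_cherry_imp_ms_cherry[OF nc ij])
  have nr: "\<not> ms_ret_cherry n (mu_net n (V,A)) (i,j)" by (rule ms_cherry_not_ms_ret_cherry[OF c])
  show ?thesis using reduced_network net_red_eq c nr mu_net_reduced by (simp add: ms_red_def)
qed

end

locale ret_cherry_reduction = network +
  fixes i j :: nat
  assumes nr: "net_ret_cherry (V,A) (i,j)" and ij: "i \<in> {1..n}" "j \<in> {1..n}"
begin

definition "h = par A (Leaf i)"
definition "g = par A (Leaf j)"
definition "f = par A g"
definition "q = (SOME q. q \<in> parents A h \<and> q \<noteq> g)"
definition "W = {h, g}"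
definition "E = {(q, Leaf i), (f, Leaf j)}"
definition "B = filter_mset (\<lambda>e. \<not> touches W e) A"

lemma config: "i \<in> X" "j \<in> X" "i \<noteq> j" "parents A (Leaf i) = {h}" "parents A (Leaf j) = {g}"
  "is_ret_node (V,A) h"
     "is_tree_node (V,A) g" "children A h = {Leaf i}" "children A g = {h, Leaf j}" "(g,h) \<in># A"
       "h \<noteq> Leaf j" "g \<noteq> h"
  using net_ret_cherry_structure[OF nr] h_def g_def by auto

lemma parents_g: "parents A g = {f}"
proof -
  obtain x where "parents A g = {x}" using config(7) unfolding tree_node_iff by blast
  thus ?thesis by (simp add: f_def par_eq)
qed

lemma parents_h: "parents A h = {g, q}" "g \<noteq> q"
proof -
  obtain a b where ab: "parents A h = {a,b}" "a \<noteq> b" using config(6) unfolding ret_node_iff by blast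
  have gin: "g \<in> parents A h" using config(10) by (simp add: parents_def)
  have ex: "\<exists>q. q \<in> parents A h \<and> q \<noteq> g" using ab by auto
  have qq: "q \<in> parents A h \<and> q \<noteq> g" unfolding q_def by (rule someI_ex[OF ex])
  show "parents A h = {g, q}" using ab gin qq by auto
  show "g \<noteq> q" using qq by metis
qed

lemma arc_f_g: "(f,g) \<in># A" using parents_g by (auto simp: parents_def)
lemma arc_q_h: "(q,h) \<in># A" using parents_h by (auto simp: parents_def)
lemma arc_h_i: "(h, Leaf i) \<in># A" using config(4) by (auto simp: parents_def)
lemma arc_g_j: "(g, Leaf j) \<in># A" using config(5) by (auto simp: parents_def)
lemma g_mem_nodes: "g \<in> V" using arc_g_j arc_nodes by blast
lemma h_mem_nodes: "h \<in> V" using arc_h_i arc_nodes by blast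
lemma f_mem_nodes: "f \<in> V" using arc_f_g arc_nodes by blast
lemma q_mem_nodes: "q \<in> V" using arc_q_h arc_nodes by blast
lemma Leaf_i_mem_nodes: "Leaf i \<in> V" using arc_h_i arc_nodes by blast
lemma Leaf_j_mem_nodes: "Leaf j \<in> V" using arc_g_j arc_nodes by blast
lemma leaf_Leaf_i: "is_leaf_node (V,A) (Leaf i)" using config(1) leaf_node_iff_Leaf by blast
lemma leaf_Leaf_j: "is_leaf_node (V,A) (Leaf j)" using config(2) leaf_node_iff_Leaf by blast
lemma children_Leaf_i: "children A (Leaf i) = {}" using children_leaf leaf_Leaf_i by blast
lemma children_Leaf_j: "children A (Leaf j) = {}" using children_leaf leaf_Leaf_j by blast
lemma Leaf_i_neq_Leaf_j: "Leaf i \<noteq> Leaf j" using config(3) by simp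

lemma Leaf_not_source: "(x,y) \<in># A \<Longrightarrow> x \<noteq> Leaf i \<and> x \<noteq> Leaf j"
  using children_Leaf_i children_Leaf_j by (auto simp: children_def)

lemma f_neq_g: "f \<noteq> g" using arc_f_g acyclic_arc_rtrancl_contr[OF acyclic_arcs, of f g] by auto
lemma q_neq_h: "q \<noteq> h" using arc_q_h acyclic_arc_rtrancl_contr[OF acyclic_arcs, of q h] by auto
lemma f_neq_h: "f \<noteq> h"
proof
  assume "f = h"
  hence "g \<in> children A h" using arc_f_g by (simp add: children_def)
  thus False using config(8) config(7) leaf_Leaf_i tree_not_leaf by auto
qed
lemma h_neq_Leaf: "h \<noteq> Leaf i" "h \<noteq> Leaf j" using Leaf_not_source[OF arc_h_i] by auto
lemma g_neq_Leaf: "g \<noteq> Leaf i" "g \<noteq> Leaf j" using Leaf_not_source[OF arc_g_j] by auto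
lemma f_neq_Leaf: "f \<noteq> Leaf i" "f \<noteq> Leaf j" using Leaf_not_source[OF arc_f_g] by auto
lemma q_neq_Leaf: "q \<noteq> Leaf i" "q \<noteq> Leaf j" using Leaf_not_source[OF arc_q_h] by auto
lemma h_not_Leaf: "h \<noteq> Leaf x"
proof
  assume "h = Leaf x"
  hence "x \<in> X" using h_mem_nodes Leaf_mem_nodes_iff by simp
  hence "is_leaf_node (V,A) h" using \<open>h = Leaf x\<close> leaf_node_iff_Leaf by blast
  thus False using config(6) ret_not_leaf by blast
qed
lemma g_not_Leaf: "g \<noteq> Leaf x"
proof
  assume "g = Leaf x"
  hence "x \<in> X" using g_mem_nodes Leaf_mem_nodes_iff by simp
  hence "is_leaf_node (V,A) g" using \<open>g = Leaf x\<close> leaf_node_iff_Leaf by blast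
  thus False using config(7) tree_not_leaf by blast
qed
lemma Leaf_neq_h_g: "Leaf x \<noteq> h" "Leaf x \<noteq> g" using h_not_Leaf g_not_Leaf by metis+

lemma touching_arcs: "e \<in># A \<Longrightarrow> touches W e \<Longrightarrow> e \<in> {(g,h), (q,h), (h, Leaf i), (f,g), (g, Leaf j)}"
proof -
  assume e: "e \<in># A" "touches W e"
  obtain x y where xy: "e = (x,y)" by (cases e)
  have "x \<in> W \<or> y \<in> W" using e xy by (simp add: touches_def)
  moreover have "x = h \<Longrightarrow> y = Leaf i" using e xy config(8) by (auto simp: children_def)
  moreover have "x = g \<Longrightarrow> y = h \<or> y = Leaf j" using e xy config(9) by (auto simp: children_def)
  moreover have "y = h \<Longrightarrow> x = g \<or> x = q" using e xy parents_h by (auto simp: parents_def)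
  moreover have "y = g \<Longrightarrow> x = f" using e xy parents_g by (auto simp: parents_def)
  ultimately show ?thesis using xy by (auto simp: W_def)
qed

lemma arcs_eq: "A = B + {#(g,h), (q,h), (h, Leaf i), (f,g), (g, Leaf j)#}"
proof -
  have "A = B + mset_set {(g,h), (q,h), (h, Leaf i), (f,g), (g, Leaf j)}"
    unfolding B_def
    by (rule arcs_split)
      (use touching_arcs config(10) arc_q_h arc_h_i arc_f_g arc_g_j in \<open>auto simp: touches_def W_def\<close>)
  moreover have "mset_set {(g,h), (q,h), (h, Leaf i), (f,g), (g, Leaf j)}
      = {#(g,h), (q,h), (h, Leaf i), (f,g), (g, Leaf j)#}"
    using parents_h(2) config(12) f_neq_g q_neq_h f_neq_h h_neq_Leaf g_neq_Leaf f_neq_Leaf q_neq_Leaf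
      Leaf_i_neq_Leaf_j by simp
  ultimately show ?thesis by simp
qed

lemma mem_B: "(x,y) \<in># B \<Longrightarrow> (x,y) \<in># A \<and> x \<notin> W \<and> y \<notin> W"
  by (simp add: B_def touches_def)
lemma B_submset: "B \<subseteq># A" by (simp add: B_def)
lemma parents_B_W: "v \<in> W \<Longrightarrow> parents B v = {}" using mem_B by (auto simp: parents_def)
lemma children_B_W: "v \<in> W \<Longrightarrow> children B v = {}" using mem_B by (auto simp: children_def)

lemma not_net_cherry: "\<not> net_cherry (V,A) (i,j)"
  using config(12) by (simp add: net_cherry_def h_def[symmetric] g_def[symmetric])

lemma net_red_eq: "net_red (V,A) (i,j) = (V - W, B + {#(q, Leaf i), (f, Leaf j)#})"
proof -
  have A1: "A - {#(g,h)#} = B + {#(q,h), (h, Leaf i), (f,g), (g, Leaf j)#}" by (subst arcs_eq) simp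
  have i1: "parents (B + {#(q,h), (h, Leaf i), (f,g), (g, Leaf j)#}) h = {q}"
    using parents_B_W[of h] h_neq_Leaf config(12) f_neq_h by (auto simp: parents_def W_def)
  have o1: "children (B + {#(q,h), (h, Leaf i), (f,g), (g, Leaf j)#}) h = {Leaf i}"
    using children_B_W[of h] q_neq_h config(12) f_neq_h by (auto simp: children_def W_def)
  have s1: "suppress (V, B + {#(q,h), (h, Leaf i), (f,g), (g, Leaf j)#}) h
       = (V - {h}, B + {#(f,g), (g, Leaf j), (q, Leaf i)#})"
    using par_eq[OF i1] chld_eq[OF o1] by (simp add: suppress_def Let_def)
  have i2: "parents (B + {#(f,g), (g, Leaf j), (q, Leaf i)#}) g = {f}"
    using parents_B_W[of g] g_neq_Leaf by (auto simp: parents_def W_def)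
  have o2: "children (B + {#(f,g), (g, Leaf j), (q, Leaf i)#}) g = {Leaf j}"
    using children_B_W[of g] f_neq_g parents_h(2) by (auto simp: children_def W_def)
  have s2: "suppress (V - {h}, B + {#(f,g), (g, Leaf j), (q, Leaf i)#}) g
       = (V - {h} - {g}, B + {#(f,g), (g, Leaf j), (q, Leaf i)#} - {#(f,g), (g, Leaf j)#} + {#(f, Leaf j)#})"
    using par_eq[OF i2] chld_eq[OF o2] by (simp add: suppress_def Let_def)
  have "net_red (V,A) (i,j) = suppress (suppress (V, A - {#(g,h)#}) h) g"
    using not_net_cherry by (simp add: net_red_def h_def[symmetric] g_def[symmetric] Let_def)
  also have "\<dots> = (V - {h} - {g},
      B + {#(f,g), (g, Leaf j), (q, Leaf i)#} - {#(f,g), (g, Leaf j)#} + {#(f, Leaf j)#})"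
    using A1 s1 s2 by simp
  also have "\<dots> = (V - W, B + {#(q, Leaf i), (f, Leaf j)#})" by (auto simp: W_def)
  finally show ?thesis .
qed

lemma finite_E: "finite E" by (simp add: E_def)
lemma rewire_eq: "rewire A W E = B + {#(q, Leaf i), (f, Leaf j)#}"
  using Leaf_i_neq_Leaf_j by (simp add: rewire_def E_def B_def)

lemma new_arcs_fresh: "\<forall>e\<in>E. e \<notin># A"
proof -
  have "(q, Leaf i) \<notin># A"
  proof
    assume "(q, Leaf i) \<in># A" hence "q \<in> parents A (Leaf i)" by (simp add: parents_def)
    thus False using config(4) q_neq_h by simp
  qed
  moreover have "(f, Leaf j) \<notin># A"
  proof
    assume "(f, Leaf j) \<in># A" hence "f \<in> parents A (Leaf j)" by (simp add: parents_def)
    thus False using config(5) f_neq_g by simp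
  qed
  ultimately show ?thesis by (simp add: E_def)
qed

lemma parents_in_W: "v \<notin> W \<Longrightarrow>
    {w \<in> parents A v. w \<in> W} = (if v = Leaf i then {h} else {}) \<union> (if v = Leaf j then {g} else {})"
proof -
  assume v: "v \<notin> W"
  have "h \<in> parents A v \<longleftrightarrow> v = Leaf i" using config(8) child_iff_parent[where A=A] by auto
  moreover have "g \<in> parents A v \<longleftrightarrow> v = Leaf j" using config(9) child_iff_parent[where A=A] v
    by (auto simp: W_def)
  ultimately show ?thesis using Leaf_i_neq_Leaf_j by (auto simp: W_def)
qed

lemma children_in_W: "v \<notin> W \<Longrightarrow>
    {c \<in> children A v. c \<in> W} = (if v = q then {h} else {}) \<union> (if v = f then {g} else {})"
proof -
  assume v: "v \<notin> W"
  have "h \<in> children A v \<longleftrightarrow> v = q" using parents_h child_iff_parent[where A=A] v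
    by (auto simp: W_def)
  moreover have "g \<in> children A v \<longleftrightarrow> v = f" using parents_g child_iff_parent[where A=A] by auto
  ultimately show ?thesis by (auto simp: W_def)
qed

lemma degrees_preserved:
  "\<forall>v\<in>V - W. card (parents (rewire A W E) v) = card (parents A v) \<and>
               card (children (rewire A W E) v) = card (children A v)"
proof
  fix v assume v: "v \<in> V - W"
  have vW: "v \<notin> W" using v by simp
  have i1: "parents (rewire A W E) v = (parents A v - {w \<in> parents A v. w \<in> W}) \<union> {w. (w,v) \<in> E}"
    using parents_rewire[OF finite_E vW] by auto
  have Ei: "{w. (w,v) \<in> E} = (if v = Leaf i then {q} else {}) \<union> (if v = Leaf j then {f} else {})"
    using Leaf_i_neq_Leaf_j by (auto simp: E_def)
  have ci: "card (parents (rewire A W E) v) = card (parents A v)"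
    unfolding i1
  proof (rule card_Diff_Un_swap[OF finite_parents])
    show "{w \<in> parents A v. w \<in> W} \<subseteq> parents A v" by auto
    show "{w. (w,v) \<in> E} \<inter> parents A v = {}" using Ei config(4) config(5) q_neq_h f_neq_g by auto
    show "card {w \<in> parents A v. w \<in> W} = card {w. (w,v) \<in> E}" unfolding parents_in_W[OF vW] Ei
      using Leaf_i_neq_Leaf_j by auto
    show "finite {w. (w,v) \<in> E}" unfolding Ei by simp
  qed
  have o1: "children (rewire A W E) v = (children A v - {c \<in> children A v. c \<in> W}) \<union> {c. (v,c) \<in> E}"
    using children_rewire[OF finite_E vW] by auto
  have Eo: "{c. (v,c) \<in> E} = (if v = q then {Leaf i} else {}) \<union> (if v = f then {Leaf j} else {})"
    using Leaf_i_neq_Leaf_j by (auto simp: E_def)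
  have co: "card (children (rewire A W E) v) = card (children A v)"
    unfolding o1
  proof (rule card_Diff_Un_swap[OF finite_children])
    show "{c \<in> children A v. c \<in> W} \<subseteq> children A v" by auto
    have "Leaf i \<notin> children A q" using config(4) q_neq_h child_iff_parent[where A=A] by auto
    moreover have "Leaf j \<notin> children A f" using config(5) f_neq_g child_iff_parent[where A=A]
      by auto
    ultimately show "{c. (v,c) \<in> E} \<inter> children A v = {}" by (auto simp: E_def)
    show "card {c \<in> children A v. c \<in> W} = card {c. (v,c) \<in> E}" unfolding children_in_W[OF vW] Eo
      using Leaf_i_neq_Leaf_j config(12) by auto
    show "finite {c. (v,c) \<in> E}" unfolding Eo by simp
  qed
  show "card (parents (rewire A W E) v) = card (parents A v) \<and>
        card (children (rewire A W E) v) = card (children A v)"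
    using ci co by simp
qed

lemma the_root_notin_W: "the_root \<notin> W"
proof
  assume "the_root \<in> W"
  hence "parents A the_root \<noteq> {}" using parents_h parents_g by (auto simp: W_def)
  thus False using parents_the_root by simp
qed

lemma new_arcs_trancl: "E \<subseteq> (set_mset A)\<^sup>+"
proof -
  have "(q, Leaf i) \<in> (set_mset A)\<^sup>+" using arc_q_h arc_h_i
    by (meson r_into_trancl' trancl_into_trancl)
  moreover have "(f, Leaf j) \<in> (set_mset A)\<^sup>+" using arc_f_g arc_g_j
    by (meson r_into_trancl' trancl_into_trancl)
  ultimately show ?thesis by (simp add: E_def)
qed

lemma new_arcs_nodes: "\<forall>e\<in>E. fst e \<in> V - W \<and> snd e \<in> V - W"
  using q_mem_nodes f_mem_nodes Leaf_i_mem_nodes Leaf_j_mem_nodes parents_h(2) q_neq_h f_neq_g f_neq_h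
    Leaf_neq_h_g by (auto simp: E_def W_def)

lemma W_subset: "W \<subseteq> V" using h_mem_nodes g_mem_nodes by (simp add: W_def)

lemma labels_eq: "{k\<in>X. Leaf k \<notin> W} = X"
  using Leaf_neq_h_g by (auto simp: W_def)

lemma reduced_network: "is_network n X (V - W, B + {#(q, Leaf i), (f, Leaf j)#})"
  using network_rewire[OF W_subset finite_E new_arcs_nodes new_arcs_fresh new_arcs_trancl degrees_preserved
      the_root_notin_W] labels_eq rewire_eq by simp

abbreviation "A' \<equiv> B + {#(q, Leaf i), (f, Leaf j)#}"

lemma reduced_network_locale: "network n X (V - W) A'" using reduced_network
  by (simp add: network_def)
lemma acyclic_A': "acyclic (set_mset A')" using network.acyclic_arcs[OF reduced_network_locale] .
lemma acyclic_B: "acyclic (set_mset B)" using acyclic_submset[OF acyclic_arcs B_submset] .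

lemma npaths_B_to_W: "v \<in> W \<Longrightarrow> npaths B u v = (if u = v then 1 else 0)"
  using npaths_to_parentless[OF acyclic_B parents_B_W] by simp
lemma npaths_B_from_W: "v \<in> W \<Longrightarrow> npaths B v x = (if v = x then 1 else 0)"
  using npaths_from_childless[OF acyclic_B children_B_W] by simp
lemma npaths_B_from_Leaf_i: "npaths B (Leaf i) x = (if Leaf i = x then 1 else 0)"
proof -
  have "children B (Leaf i) = {}" using children_Leaf_i B_submset
    by (auto simp: children_def dest: mset_subset_eqD)
  thus ?thesis using npaths_from_childless[OF acyclic_B] by simp
qed
lemma npaths_B_from_Leaf_j: "npaths B (Leaf j) x = (if Leaf j = x then 1 else 0)"
proof -
  have "children B (Leaf j) = {}" using children_Leaf_j B_submset
    by (auto simp: children_def dest: mset_subset_eqD)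
  thus ?thesis using npaths_from_childless[OF acyclic_B] by simp
qed
lemma npaths_B_to_Leaf_i: "npaths B u (Leaf i) = (if u = Leaf i then 1 else 0)"
proof -
  have "parents B (Leaf i) = {}" using config(4) mem_B by (auto simp: parents_def W_def)
  thus ?thesis using npaths_to_parentless[OF acyclic_B] by simp
qed
lemma npaths_B_to_Leaf_j: "npaths B u (Leaf j) = (if u = Leaf j then 1 else 0)"
proof -
  have "parents B (Leaf j) = {}" using config(5) mem_B by (auto simp: parents_def W_def)
  thus ?thesis using npaths_to_parentless[OF acyclic_B] by simp
qed

lemma npaths_reduced:
  assumes u: "u \<notin> W"
  shows "x \<notin> W \<Longrightarrow> npaths A u x = npaths B u x + npaths B u q * (if Leaf i = x then 1 else 0)
            + npaths B u f * ((if Leaf j = x then 1 else 0) + (if Leaf i = x then 1 else 0))"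
    and "npaths A' u x = npaths B u x + npaths B u q * (if Leaf i = x then 1 else 0)
            + npaths B u f * (if Leaf j = x then 1 else 0)"
    and "npaths A u h = npaths B u q + npaths B u f"
proof -
  define B1 where "B1 = B + {#(h, Leaf i)#}"
  define B2 where "B2 = B1 + {#(g, Leaf j)#}"
  define B3 where "B3 = B2 + {#(g, h)#}"
  define B4 where "B4 = B3 + {#(q, h)#}"
  define C where "C = B + {#(q, Leaf i)#}"
  have AB: "A = B4 + {#(f,g)#}" unfolding B4_def B3_def B2_def B1_def
    by (subst arcs_eq) (simp add: add_mset_commute)
  have A'C: "A' = C + {#(f, Leaf j)#}" unfolding C_def by (simp add: add_mset_commute)
  have a5: "acyclic (set_mset (B4 + {#(f, g)#}))" using acyclic_arcs AB by simp
  have a4: "acyclic (set_mset (B3 + {#(q, h)#}))" using acyclic_add_mset_left[OF a5] B4_def by simp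
  have a3: "acyclic (set_mset (B2 + {#(g, h)#}))" using acyclic_add_mset_left[OF a4] B3_def by simp
  have a2: "acyclic (set_mset (B1 + {#(g, Leaf j)#}))" using acyclic_add_mset_left[OF a3] B2_def by simp
  have a1: "acyclic (set_mset (B + {#(h, Leaf i)#}))" using acyclic_add_mset_left[OF a2] B1_def by simp
  have aA': "acyclic (set_mset (C + {#(f, Leaf j)#}))" using acyclic_A' by (simp only: A'C)
  have aC: "acyclic (set_mset (B + {#(q, Leaf i)#}))" using acyclic_add_mset_left[OF aA'] C_def by simp
  have P1: "npaths B1 y z = npaths B y z + npaths B y h * npaths B (Leaf i) z" for y z
    unfolding B1_def by (rule npaths_add_arc[OF a1])
  have P2: "npaths B2 y z = npaths B1 y z + npaths B1 y g * npaths B1 (Leaf j) z" for y z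
    unfolding B2_def by (rule npaths_add_arc[OF a2])
  have P3: "npaths B3 y z = npaths B2 y z + npaths B2 y g * npaths B2 h z" for y z
    unfolding B3_def by (rule npaths_add_arc[OF a3])
  have P4: "npaths B4 y z = npaths B3 y z + npaths B3 y q * npaths B3 h z" for y z
    unfolding B4_def by (rule npaths_add_arc[OF a4])
  have PA: "npaths A y z = npaths B4 y z + npaths B4 y f * npaths B4 g z" for y z
    using npaths_add_arc[OF a5] AB by simp
  have PC: "npaths C y z = npaths B y z + npaths B y q * npaths B (Leaf i) z" for y z
    unfolding C_def by (rule npaths_add_arc[OF aC])
  have PA': "npaths A' y z = npaths C y z + npaths C y f * npaths C (Leaf j) z" for y z
    unfolding A'C by (rule npaths_add_arc[OF aA'])
  have hW: "h \<in> W" "g \<in> W" by (simp_all add: W_def)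
  have bh1: "npaths B y h = (if y = h then 1 else 0)" for y using npaths_B_to_W[OF hW(1)] .
  have bg1: "npaths B y g = (if y = g then 1 else 0)" for y using npaths_B_to_W[OF hW(2)] .
  have bh2: "npaths B h z = (if h = z then 1 else 0)" for z using npaths_B_from_W[OF hW(1)] .
  have bg2: "npaths B g z = (if g = z then 1 else 0)" for z using npaths_B_from_W[OF hW(2)] .
  have uhg: "u \<noteq> h" "u \<noteq> g" using u by (auto simp: W_def)
  have d: "q \<noteq> h" "q \<noteq> g" "f \<noteq> h" "f \<noteq> g" "g \<noteq> h" "h \<noteq> g"
    "q \<noteq> Leaf i" "q \<noteq> Leaf j" "f \<noteq> Leaf i" "f \<noteq> Leaf j" "h \<noteq> Leaf i" "h \<noteq> Leaf j"
    "g \<noteq> Leaf i" "g \<noteq> Leaf j" "Leaf i \<noteq> Leaf j" "Leaf j \<noteq> Leaf i"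
    "Leaf i \<noteq> h" "Leaf j \<noteq> h" "Leaf i \<noteq> g" "Leaf j \<noteq> g"
    using q_neq_h parents_h(2) f_neq_h f_neq_g config(12) q_neq_Leaf f_neq_Leaf h_neq_Leaf g_neq_Leaf
      Leaf_i_neq_Leaf_j Leaf_neq_h_g by auto
  note base = bh1 bg1 bh2 bg2 npaths_B_from_Leaf_i npaths_B_from_Leaf_j npaths_B_to_Leaf_i npaths_B_to_Leaf_j
  show "x \<notin> W \<Longrightarrow> npaths A u x = npaths B u x + npaths B u q * (if Leaf i = x then 1 else 0)
            + npaths B u f * ((if Leaf j = x then 1 else 0) + (if Leaf i = x then 1 else 0))"
  proof -
    assume x: "x \<notin> W"
    have xhg: "x \<noteq> h" "x \<noteq> g" "h \<noteq> x" "g \<noteq> x" using x by (auto simp: W_def)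
    show ?thesis using uhg xhg d by (simp add: PA P4 P3 P2 P1 base)
  qed
  show "npaths A' u x = npaths B u x + npaths B u q * (if Leaf i = x then 1 else 0)
            + npaths B u f * (if Leaf j = x then 1 else 0)"
    unfolding PA' using uhg d by (simp add: PC base)
  show "npaths A u h = npaths B u q + npaths B u f"
    using uhg d by (simp add: PA P4 P3 P2 P1 base)
qed

lemma node_kinds_reduced: "v \<in> V - W \<Longrightarrow>
    is_root_node (V-W,A') v = is_root_node (V,A) v \<and> is_leaf_node (V-W,A') v = is_leaf_node (V,A) v \<and>
    is_tree_node (V-W,A') v = is_tree_node (V,A) v \<and> is_ret_node (V-W,A') v = is_ret_node (V,A) v"
  using node_kinds_rewire[OF finite_E new_arcs_fresh degrees_preserved] rewire_eq by simp

lemma h_mem_V_H: "h \<in> V_H (V,A)" using config(6) ret_mem_V_H by simp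

lemma V_H_reduced: "V_H (V - W, A') = V_H (V,A) - {h}"
proof (intro equalityI subsetI)
  fix v assume "v \<in> V_H (V - W, A')"
  hence v: "v \<in> V - W" "is_ret_node (V-W,A') v" by (auto simp: V_H_def)
  thus "v \<in> V_H (V,A) - {h}" using node_kinds_reduced[OF v(1)] by (auto simp: V_H_eq W_def)
next
  fix v assume "v \<in> V_H (V,A) - {h}"
  hence v: "v \<in> V" "is_ret_node (V,A) v" "v \<noteq> h" by (auto simp: V_H_eq)
  have "v \<noteq> g" using v(2) config(7) ret_not_tree by blast
  hence vW: "v \<in> V - W" using v by (simp add: W_def)
  thus "v \<in> V_H (V - W, A')" using node_kinds_reduced[OF vW] v by (simp add: V_H_def)
qed

lemma g_mem_V_T: "g \<in> V_T (V,A)" using tree_mem_V_T[OF config(7)] .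
lemma h_notin_V_T: "h \<notin> V_T (V,A)" using config(6) ret_not_tree ret_not_leaf by (simp add: V_T_eq)

lemma V_T_reduced: "V_T (V - W, A') = V_T (V,A) - {g}"
proof (intro equalityI subsetI)
  fix v assume "v \<in> V_T (V - W, A')"
  hence v: "v \<in> V - W" "is_leaf_node (V-W,A') v \<or> is_tree_node (V-W,A') v" by (auto simp: V_T_def)
  thus "v \<in> V_T (V,A) - {g}" using node_kinds_reduced[OF v(1)] by (auto simp: V_T_eq W_def)
next
  fix v assume "v \<in> V_T (V,A) - {g}"
  hence v: "v \<in> V" "is_leaf_node (V,A) v \<or> is_tree_node (V,A) v" "v \<noteq> g" by (auto simp: V_T_eq)
  have "v \<noteq> h" using v(2) config(6) ret_not_tree ret_not_leaf by blast
  hence vW: "v \<in> V - W" using v by (simp add: W_def)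
  thus "v \<in> V_T (V - W, A')" using node_kinds_reduced[OF vW] v by (simp add: V_T_def)
qed

lemma mu_vec_reduced:
  assumes u: "u \<in> V - W"
  shows "mu_vec n (V - W, A') u = (mu_vec n (V,A) u)(0 := mu_vec n (V,A) u 0 - mu_vec n (V,A) u i,
            i := mu_vec n (V,A) u i - mu_vec n (V,A) u j)"
proof (rule ext)
  fix k
  let ?m = "mu_vec n (V,A)"
  have uW: "u \<notin> W" using u by simp
  have i0: "i \<noteq> 0" "j \<noteq> 0" using ij by auto
  note F1 = npaths_reduced(1)[OF uW] and F2 = npaths_reduced(2)[OF uW]
    and F3 = npaths_reduced(3)[OF uW]
  have LiW: "Leaf i \<notin> W" "Leaf j \<notin> W" using Leaf_neq_h_g by (auto simp: W_def)
  have mi: "?m u i = npaths A u (Leaf i)" using mu_vec_label[of i u] config(1) i0 by simp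
  have mj: "?m u j = npaths A u (Leaf j)" using mu_vec_label[of j u] config(2) i0 by simp
  show "mu_vec n (V - W, A') u k = ((?m u)(0 := ?m u 0 - ?m u i, i := ?m u i - ?m u j)) k"
  proof (cases "k = 0")
    case True
    have "(\<Sum>x\<in>V_H (V,A) - {h}. npaths A' u x) = (\<Sum>x\<in>V_H (V,A) - {h}. npaths A u x)"
    proof (rule sum.cong[OF refl])
      fix x assume x: "x \<in> V_H (V,A) - {h}"
      hence xr: "is_ret_node (V,A) x" "x \<noteq> h" by (auto simp: V_H_eq)
      have "x \<noteq> g" using xr config(7) ret_not_tree by blast
      hence xW: "x \<notin> W" using xr by (simp add: W_def)
      have "x \<noteq> Leaf i" "x \<noteq> Leaf j" using xr(1) leaf_Leaf_i leaf_Leaf_j ret_not_leaf by auto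
      thus "npaths A' u x = npaths A u x" using F1[OF xW] F2[of x] by simp
    qed
    also have "\<dots> = ?m u 0 - npaths A u h" using h_mem_V_H finite_V_H
      by (simp add: sum_diff1_nat mu_vec_0)
    also have "\<dots> = ?m u 0 - ?m u i"
    proof (cases "u = Leaf i")
      case True
      have "?m u 0 = 0" using True fun_cong[OF mu_vec_Leaf[OF config(1)], of 0] i0
        by (simp add: delta_def)
      thus ?thesis by simp
    next
      case False
      have "npaths A u (Leaf i) = npaths A u h"
        using F1[OF LiW(1)] F3 False Leaf_i_neq_Leaf_j npaths_B_to_Leaf_i by simp
      thus ?thesis using mi by simp
    qed
    finally show ?thesis using True i0 unfolding mu_vec_def snd_conv V_H_reduced by simp
  next
    case False
    show ?thesis
    proof (cases "k = i")
      case True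
      have "npaths A' u (Leaf i) = npaths A u (Leaf i) - npaths A u (Leaf j)"
      proof (cases "u = Leaf j")
        case True
        thus ?thesis
          using F1[OF LiW(1)] F1[OF LiW(2)] F2[of "Leaf i"] Leaf_i_neq_Leaf_j npaths_B_from_Leaf_j
            q_neq_Leaf f_neq_Leaf by simp
      next
        case False
        thus ?thesis
          using F1[OF LiW(1)] F1[OF LiW(2)] F2[of "Leaf i"] Leaf_i_neq_Leaf_j npaths_B_to_Leaf_j
            by simp
      qed
      moreover have "Leaf i \<in> V - W" using Leaf_i_mem_nodes LiW by simp
      ultimately show ?thesis using True i0 ij mi mj unfolding mu_vec_def fst_conv snd_conv by simp
    next
      case ki: False
      have LW: "Leaf k \<notin> W" using Leaf_neq_h_g by (simp add: W_def)
      have "npaths A' u (Leaf k) = npaths A u (Leaf k)" using F1[OF LW] F2[of "Leaf k"] ki by simp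
      thus ?thesis using False ki LW unfolding mu_vec_def fst_conv snd_conv by simp
    qed
  qed
qed

lemma mu_vec_g: "mu_vec n (V,A) g = delta {0,i,j}"
  unfolding g_def by (rule mu_vec_ret_cherry_grandparent[OF nr])

lemma mu_net_reduced: "mu_net n (V - W, A') = image_mset (\<lambda>\<mu>. \<mu>(0 := \<mu> 0 - \<mu> i, i := \<mu> i - \<mu> j))
     (mu_net n (V,A) - {#delta {0,i,j}#})"
proof -
  let ?m = "mu_vec n (V,A)"
  have fin: "finite (V_T (V,A))" by (rule finite_V_T)
  have "mset_set (V_T (V,A)) = add_mset g (mset_set (V_T (V,A) - {g}))"
    by (rule mset_set.remove[OF fin g_mem_V_T])
  hence "mu_net n (V,A) = add_mset (delta {0,i,j}) (image_mset ?m (mset_set (V_T (V,A) - {g})))"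
    using mu_vec_g by (simp add: mu_net_def)
  hence "mu_net n (V,A) - {#delta {0,i,j}#} = image_mset ?m (mset_set (V_T (V,A) - {g}))" by simp
  hence "image_mset (\<lambda>\<mu>. \<mu>(0 := \<mu> 0 - \<mu> i, i := \<mu> i - \<mu> j)) (mu_net n (V,A) - {#delta {0,i,j}#})
       = image_mset (\<lambda>u. (?m u)(0 := ?m u 0 - ?m u i, i := ?m u i - ?m u j)) (mset_set (V_T (V,A) - {g}))"
    by (simp add: image_mset.compositionality comp_def)
  also have "\<dots> = image_mset (mu_vec n (V - W, A')) (mset_set (V_T (V,A) - {g}))"
  proof (rule image_mset_cong)
    fix u assume "u \<in># mset_set (V_T (V,A) - {g})"
    hence "u \<in> V_T (V,A) - {g}" using fin by simp
    hence "u \<in> V - W" using h_notin_V_T by (auto simp: V_T_eq W_def)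
    thus "(?m u)(0 := ?m u 0 - ?m u i, i := ?m u i - ?m u j) = mu_vec n (V - W, A') u"
      using mu_vec_reduced by simp
  qed
  also have "\<dots> = mu_net n (V - W, A')" unfolding mu_net_def V_T_reduced ..
  finally show ?thesis by simp
qed

lemma ret_cherry_reduction_correct: "is_network n X (net_red (V,A) (i,j)) \<and>
   ms_red n (mu_net n (V,A)) (i,j) = Some (mu_net n (net_red (V,A) (i,j)))"
proof -
  have r: "ms_ret_cherry n (mu_net n (V,A)) (i,j)"
    by (rule net_ret_cherry_imp_ms_ret_cherry[OF nr ij])
  have nc: "\<not> ms_cherry n (mu_net n (V,A)) (i,j)" using ms_cherry_not_ms_ret_cherry r by blast
  show ?thesis using reduced_network net_red_eq r nc mu_net_reduced by (simp add: ms_red_def)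
qed

end

section \<open>Reducing sequences\<close>

lemma reduction_step:
  assumes net: "is_network n X N" and ij: "i \<in> {1..n}" "j \<in> {1..n}"
  shows "net_reducible N (i,j) \<longleftrightarrow> ms_reducible n (mu_net n N) (i,j)"
    and "net_reducible N (i,j) \<Longrightarrow> \<exists>X'. is_network n X' (net_red N (i,j)) \<and>
           ms_red n (mu_net n N) (i,j) = Some (mu_net n (net_red N (i,j)))"
proof -
  obtain V A where N: "N = (V,A)" by (cases N)
  interpret network n X V A using net N by (simp add: network_def)
  show "net_reducible N (i,j) \<longleftrightarrow> ms_reducible n (mu_net n N) (i,j)"
    using net_reducible_iff_ms_reducible[OF ij] N by simp
  assume red: "net_reducible N (i,j)"
  show "\<exists>X'. is_network n X' (net_red N (i,j)) \<and>
          ms_red n (mu_net n N) (i,j) = Some (mu_net n (net_red N (i,j)))"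
  proof (cases "net_cherry (V,A) (i,j)")
    case True
    interpret cherry_reduction n X V A i j using True ij by unfold_locales simp_all
    show ?thesis using cherry_reduction_correct N by blast
  next
    case False
    hence "net_ret_cherry (V,A) (i,j)" using red N by (simp add: net_reducible_def)
    then interpret ret_cherry_reduction n X V A i j using ij by unfold_locales simp_all
    show ?thesis using ret_cherry_reduction_correct N by blast
  qed
qed

lemma seq_reduction:
  fixes N :: "'v net"
  assumes "is_network n X N" "\<forall>(i,j) \<in> set S. i \<in> {1..n} \<and> j \<in> {1..n}"
  shows "(net_seq_reducible N S \<longleftrightarrow> ms_seq_reducible n (mu_net n N) S) \<and>
         (net_seq_reducible N S \<longrightarrow> ms_seq_red n (mu_net n N) S = Some (mu_net n (net_seq_red N S)))"
  using assms
proof (induction S arbitrary: N X)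
  case Nil thus ?case by simp
next
  case (Cons s S)
  obtain i j where s: "s = (i,j)" by (cases s)
  have ij: "i \<in> {1..n}" "j \<in> {1..n}" using Cons.prems(2) s by auto
  note iff = reduction_step(1)[OF Cons.prems(1) ij, folded s]
  show ?case
  proof (cases "net_reducible N s")
    case False thus ?thesis using iff by simp
  next
    case True
    then obtain X' where net': "is_network n X' (net_red N s)"
      and red: "ms_red n (mu_net n N) s = Some (mu_net n (net_red N s))"
      using reduction_step(2)[OF Cons.prems(1) ij] s by blast
    with Cons.IH[OF net'] Cons.prems(2) show ?thesis using iff red by (cases "S = []") simp_all
  qed
qed

theorem mainTheorem9:
  fixes n :: nat and X :: "nat set" and N :: "'v net" and S :: "(nat \<times> nat) list"
  assumes "is_network n X N"
    and "orchard N"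
    and "S \<noteq> []"
    and "\<forall>(i,j) \<in> set S. i \<in> {1..n} \<and> j \<in> {1..n}"
  shows "(net_seq_reducible N S \<longleftrightarrow> ms_seq_reducible n (mu_net n N) S) \<and>
         (net_seq_reducible N S \<longrightarrow>
           ms_seq_red n (mu_net n N) S = Some (mu_net n (net_seq_red N S)))"
  using seq_reduction[OF assms(1,4)] .

end
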